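(* Let $\mathcal T$ be a set of $k>1$ binary trees over the same label set $L$, and let $n=|L\setminus\{\rho\}|$. Then $$\min_{\sigma}\ \hat d_\sigma(\mathcal T)\;=\;m(\mathcal T)\;=\;|\mathrm{MAAF}(\mathcal T)|-1,$$ where the minimum ranges over all leaf orderings $\sigma:L\setminus\{\rho\}\to\{0,\dots,n-1\}$. That is, if $\sigma^*$ is a leaf ordering minimizing $\hat d_\sigma(\mathcal T)$, then $\hat d_{\sigma^*}(\mathcal T)$ equals the size of a maximum acyclic agreement forest of $\mathcal T$ minus one.
   Context: Trees. Fix a finite label set $L$ containing a distinguished label $\rho$, and let $n=|L\setminus\{\rho\}|$. A (planted, binary phylogenetic) tree $T$ over $L$ is a rooted tree whose top vertex is labeled $\rho$ and has exactly one child $r(T)$ (the root), in which every other non-leaf vertex has exactly two children, and whose leaves are bijectively labeled by $L\setminus\{\rho\}$; vertices are identified with their labels. For a vertex $v$, $T_v$ is the subtree rooted at $v$ and $cl(v)=L(T_v)$ is its cluster ($L(\cdot)$ denotes the set of labels of a tree). For $S\subseteq L$, $T(S)$ is the smallest subtree of $T$ containing all vertices labeled by $S$, and $T|_S$ is obtained from $T(S)$ by suppressing all unlabeled vertices with fewer than two children. OLA vectors. A leaf ordering is a bijection $\sigma:L\setminus\{\rho\}\to\{0,\dots,n-1\}$; write $l_i=\sigma^{-1}(i)$. For a binary tree $T$ whose non-$\rho$ labels lie in $L\setminus\{\rho\}$ and a vertex $v\ne\rho$, let $\mu(v)=\min\{\sigma(l): l\in L(T_v)\setminus\{\rho\}\}$;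 each leaf $l$ gets index $\sigma(l)$, and each internal vertex $v$ (not a leaf, not $\rho$) with children $v_1,v_2$ gets index $\sigma(v):=-\max\{\mu(v_1),\mu(v_2)\}$. Let $T^i:=T|_{\{\rho,l_0,\dots,l_i\}}$. For $1\le i\le n-1$ let $v_i$ be the sibling of $l_i$ in $T^i$, and define $OLA(T,\sigma)_i:=\sigma(v_i)$ (index computed in $T^i$). This gives $OLA(T,\sigma)\in\mathbb Z^{n-1}$. Distances. For a finite set $\mathcal T$ of at least two binary trees over $L$ and a leaf ordering $\sigma$, the Hamming OLA distance $d_\sigma(\mathcal T)$ is the number of indices $i\in\{1,\dots,n-1\}$ at which not all vectors $OLA(T,\sigma)$, $T\in\mathcal T$, agree. The set $M\subseteq\{1,\dots,n-1\}$ of mismatched indices is built by processing $i=1,\dots,n-1$ in increasing order: $i$ is put in $M$ iff either there are $T,T'\in\mathcal T$ with $OLA(T,\sigma)_i\ne OLA(T',\sigma)_i$, or all $OLA(T,\sigma)_i$ ($T\in\mathcal T$) equal a common value $-j$ with $j$ already in $M$. The corrected OLA distance is $\hat d_\sigma(\mathcal T):=|M|$. Agreement forests. A forest $\mathcal F=\{C_1,\dots,C_k\}$ of trees with pairwise disjoint label sets agrees with a tree $T$ over $L$ if (i) for each $C_i$, $T|_{L(C_i)}$ is isomorphic to $C_i$ (label-preserving); (ii) the subtrees $T(L(C_i))$ are pairwise vertex-disjoint; (iii) $\bigcup_i L(C_i)=L$. $\mathcal F$ is an agreement forest for a set $\mathcal T$ of trees if it agrees with every $T\in\mathcal T$. The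 inheritance graph $G(\mathcal T,\mathcal F)$ is the directed graph on vertex set $\mathcal F$ with an edge $(C_i,C_j)$, $i\neq j$, iff some $T\in\mathcal T$ contains a directed (root-to-leaf direction) path from the root of $T(L(C_i))$ to the root of $T(L(C_j))$. $\mathcal F$ is an acyclic agreement forest (AAF) if additionally $G(\mathcal T,\mathcal F)$ has no directed cycle; a maximum acyclic agreement forest $\mathrm{MAAF}(\mathcal T)$ is an AAF with the minimum possible number of components. The reticulation number is $m(\mathcal T):=|\mathrm{MAAF}(\mathcal T)|-1$. *)

theory Defs
  imports Main
begin

text \<open>A rooted binary tree with labelled leaves and unlabelled internal vertices.
Children are unordered: isomorphism (biso) allows swapping them.\<close>

datatype 'a btree = Leaf 'a | Node "'a btree" "'a btree"

fun leaves :: "'a btree \<Rightarrow> 'a list" where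
  "leaves (Leaf a) = [a]"
| "leaves (Node l r) = leaves l @ leaves r"

text \<open>All subtrees (= vertices, since leaves are distinct in a tree).\<close>
fun subtrees :: "'a btree \<Rightarrow> 'a btree set" where
  "subtrees (Leaf a) = {Leaf a}"
| "subtrees (Node l r) = insert (Node l r) (subtrees l \<union> subtrees r)"

fun biso :: "'a btree \<Rightarrow> 'a btree \<Rightarrow> bool" where
  "biso (Leaf a) (Leaf b) = (a = b)"
| "biso (Node l r) (Node l' r') = ((biso l l' \<and> biso r r') \<or> (biso l r' \<and> biso r l'))"
| "biso _ _ = False"

fun restrict :: "'a set \<Rightarrow> 'a btree \<Rightarrow> 'a btree option" where
  "restrict S (Leaf a) = (if a \<in> S then Some (Leaf a) else None)"
| "restrict S (Node l r) =
     (case restrict S l of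
        None \<Rightarrow> restrict S r
      | Some x \<Rightarrow> (case restrict S r of None \<Rightarrow> Some x | Some y \<Rightarrow> Some (Node x y)))"

text \<open>A planted binary phylogenetic tree T over L is represented by the binary tree t = T_{r(T)}
rooted at r(T); the top vertex labelled \<rho> (whose only child is r(T)) is implicit.\<close>

definition is_tree :: "'a \<Rightarrow> 'a set \<Rightarrow> 'a btree \<Rightarrow> bool" where
  "is_tree \<rho> L t \<longleftrightarrow> distinct (leaves t) \<and> set (leaves t) = L - {\<rho>}"

text \<open>Vertices of the planted tree: None is the top vertex \<rho>, Some s the root of subtree s.\<close>
definition pverts :: "'a btree \<Rightarrow> 'a btree option set" where
  "pverts t = insert None (Some ` subtrees t)"

fun panc :: "'a btree option \<Rightarrow> 'a btree option \<Rightarrow> bool" where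
  "panc None v = True"
| "panc (Some a) None = False"
| "panc (Some a) (Some b) = (b \<in> subtrees a)"

definition lvert :: "'a \<Rightarrow> 'a \<Rightarrow> 'a btree option" where
  "lvert \<rho> x = (if x = \<rho> then None else Some (Leaf x))"

text \<open>Vertex set of T(S), the smallest subtree containing the vertices labelled by S:
the vertices lying below the lowest common ancestor of S and above some vertex of S.\<close>
definition span :: "'a \<Rightarrow> 'a btree \<Rightarrow> 'a set \<Rightarrow> 'a btree option set" where
  "span \<rho> t S = {v \<in> pverts t. (\<exists>x\<in>S. panc v (lvert \<rho> x)) \<and>
       (\<forall>w\<in>pverts t. (\<forall>x\<in>S. panc w (lvert \<rho> x)) \<longrightarrow> panc w v)}"

definition sroot :: "'a \<Rightarrow> 'a btree \<Rightarrow> 'a set \<Rightarrow> 'a btree option" where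
  "sroot \<rho> t S = (THE v. v \<in> pverts t \<and> (\<forall>x\<in>S. panc v (lvert \<rho> x)) \<and>
       (\<forall>w\<in>pverts t. (\<forall>x\<in>S. panc w (lvert \<rho> x)) \<longrightarrow> panc w v))"

text \<open>A component is either an ordinary rooted binary tree (not containing \<rho>), or a tree
whose top vertex is \<rho> with at most one child subtree (Planted None is the single vertex \<rho>).\<close>
datatype 'a ftree = Unplanted "'a btree" | Planted "'a btree option"

fun flabels :: "'a \<Rightarrow> 'a ftree \<Rightarrow> 'a set" where
  "flabels \<rho> (Unplanted c) = set (leaves c)"
| "flabels \<rho> (Planted None) = {\<rho>}"
| "flabels \<rho> (Planted (Some c)) = insert \<rho> (set (leaves c))"

fun fwf :: "'a \<Rightarrow> 'a ftree \<Rightarrow> bool" where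
  "fwf \<rho> (Unplanted c) = (distinct (leaves c) \<and> \<rho> \<notin> set (leaves c))"
| "fwf \<rho> (Planted None) = True"
| "fwf \<rho> (Planted (Some c)) = (distinct (leaves c) \<and> \<rho> \<notin> set (leaves c))"

fun fiso :: "'a ftree \<Rightarrow> 'a ftree \<Rightarrow> bool" where
  "fiso (Unplanted a) (Unplanted b) = biso a b"
| "fiso (Planted None) (Planted None) = True"
| "fiso (Planted (Some a)) (Planted (Some b)) = biso a b"
| "fiso _ _ = False"

definition prestrict :: "'a \<Rightarrow> 'a set \<Rightarrow> 'a btree \<Rightarrow> 'a ftree option" where
  "prestrict \<rho> S t =
     (if \<rho> \<in> S then Some (Planted (restrict S t)) else map_option Unplanted (restrict S t))"

definition is_forest :: "'a \<Rightarrow> 'a ftree set \<Rightarrow> bool" where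
  "is_forest \<rho> F \<longleftrightarrow> finite F \<and> (\<forall>C\<in>F. fwf \<rho> C) \<and>
     (\<forall>C\<in>F. \<forall>C'\<in>F. C \<noteq> C' \<longrightarrow> flabels \<rho> C \<inter> flabels \<rho> C' = {})"

definition agrees_with :: "'a \<Rightarrow> 'a set \<Rightarrow> 'a ftree set \<Rightarrow> 'a btree \<Rightarrow> bool" where
  "agrees_with \<rho> L F t \<longleftrightarrow>
     (\<forall>C\<in>F. \<exists>X. prestrict \<rho> (flabels \<rho> C) t = Some X \<and> fiso X C) \<and>
     (\<forall>C\<in>F. \<forall>C'\<in>F. C \<noteq> C' \<longrightarrow> span \<rho> t (flabels \<rho> C) \<inter> span \<rho> t (flabels \<rho> C') = {}) \<and>
     (\<Union>C\<in>F. flabels \<rho> C) = L"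

definition agreement_forest :: "'a \<Rightarrow> 'a set \<Rightarrow> 'a btree set \<Rightarrow> 'a ftree set \<Rightarrow> bool" where
  "agreement_forest \<rho> L Ts F \<longleftrightarrow> is_forest \<rho> F \<and> (\<forall>t\<in>Ts. agrees_with \<rho> L F t)"

definition inheritance_graph :: "'a \<Rightarrow> 'a btree set \<Rightarrow> 'a ftree set \<Rightarrow> ('a ftree \<times> 'a ftree) set" where
  "inheritance_graph \<rho> Ts F = {(C, C'). C \<in> F \<and> C' \<in> F \<and> C \<noteq> C' \<and>
     (\<exists>t\<in>Ts. panc (sroot \<rho> t (flabels \<rho> C)) (sroot \<rho> t (flabels \<rho> C')))}"

definition acyclic_agreement_forest :: "'a \<Rightarrow> 'a set \<Rightarrow> 'a btree set \<Rightarrow> 'a ftree set \<Rightarrow> bool" where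
  "acyclic_agreement_forest \<rho> L Ts F \<longleftrightarrow>
     agreement_forest \<rho> L Ts F \<and> acyclic (inheritance_graph \<rho> Ts F)"

definition reticulation_number :: "'a \<Rightarrow> 'a set \<Rightarrow> 'a btree set \<Rightarrow> nat" where
  "reticulation_number \<rho> L Ts = Min {card F | F. acyclic_agreement_forest \<rho> L Ts F} - 1"

definition leaf_ordering :: "'a \<Rightarrow> 'a set \<Rightarrow> ('a \<Rightarrow> nat) \<Rightarrow> bool" where
  "leaf_ordering \<rho> L \<sigma> \<longleftrightarrow> bij_betw \<sigma> (L - {\<rho>}) {0..<card (L - {\<rho>})}"

definition lo :: "'a \<Rightarrow> 'a set \<Rightarrow> ('a \<Rightarrow> nat) \<Rightarrow> nat \<Rightarrow> 'a" where
  "lo \<rho> L \<sigma> i = inv_into (L - {\<rho>}) \<sigma> i"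

fun sibling :: "'a \<Rightarrow> 'a btree \<Rightarrow> 'a btree option" where
  "sibling x (Leaf a) = None"
| "sibling x (Node a b) =
     (if a = Leaf x then Some b else if b = Leaf x then Some a
      else (case sibling x a of Some s \<Rightarrow> Some s | None \<Rightarrow> sibling x b))"

definition mu :: "('a \<Rightarrow> nat) \<Rightarrow> 'a btree \<Rightarrow> nat" where
  "mu \<sigma> t = Min (\<sigma> ` set (leaves t))"

fun oidx :: "('a \<Rightarrow> nat) \<Rightarrow> 'a btree \<Rightarrow> int" where
  "oidx \<sigma> (Leaf l) = int (\<sigma> l)"
| "oidx \<sigma> (Node a b) = - int (max (mu \<sigma> a) (mu \<sigma> b))"

text \<open>OLA(T,\<sigma>)_i = index of the sibling of l_i in T^i = T|_{\<rho>,l_0..l_i} (for 1 \<le> i \<le> n-1;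
the \<rho>-part of T^i is implicit, the sibling lies in the root subtree).\<close>
definition ola :: "'a \<Rightarrow> 'a set \<Rightarrow> ('a \<Rightarrow> nat) \<Rightarrow> 'a btree \<Rightarrow> nat \<Rightarrow> int" where
  "ola \<rho> L \<sigma> t i =
     oidx \<sigma> (the (sibling (lo \<rho> L \<sigma> i) (the (restrict (lo \<rho> L \<sigma> ` {0..i}) t))))"

text \<open>mismatch_upto i = M \<inter> {1..i}, built in increasing order of indices.\<close>
fun mismatch_upto :: "'a \<Rightarrow> 'a set \<Rightarrow> 'a btree set \<Rightarrow> ('a \<Rightarrow> nat) \<Rightarrow> nat \<Rightarrow> nat set" where
  "mismatch_upto \<rho> L Ts \<sigma> 0 = {}"
| "mismatch_upto \<rho> L Ts \<sigma> (Suc i) =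
     (if (\<exists>t\<in>Ts. \<exists>t'\<in>Ts. ola \<rho> L \<sigma> t (Suc i) \<noteq> ola \<rho> L \<sigma> t' (Suc i)) \<or>
         (\<exists>j\<in>mismatch_upto \<rho> L Ts \<sigma> i. \<forall>t\<in>Ts. ola \<rho> L \<sigma> t (Suc i) = - int j)
      then insert (Suc i) (mismatch_upto \<rho> L Ts \<sigma> i)
      else mismatch_upto \<rho> L Ts \<sigma> i)"

definition corrected_ola_dist :: "'a \<Rightarrow> 'a set \<Rightarrow> 'a btree set \<Rightarrow> ('a \<Rightarrow> nat) \<Rightarrow> nat" where
  "corrected_ola_dist \<rho> L Ts \<sigma> = card (mismatch_upto \<rho> L Ts \<sigma> (card (L - {\<rho>}) - 1))"

end

theory Submission
  imports Defs
begin

text \<open>Fix a leaf ordering \<open>\<sigma>\<close> and process the leaves \<open>l\<^sub>0, l\<^sub>1, \<dots>\<close> in order, maintaining a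
  partition of \<open>{\<rho>, l\<^sub>0, \<dots>, l\<^sub>i}\<close> into blocks. If index \<open>i+1\<close> is no mismatch, every tree attaches
  \<open>l\<^sub>i\<^sub>+\<^sub>1\<close> at the same place relative to the block of the leaf realising \<open>OLA\<^sub>i\<^sub>+\<^sub>1\<close>, and \<open>l\<^sub>i\<^sub>+\<^sub>1\<close>
  joins that block; otherwise it opens a new block. The blocks induce isomorphic and vertex-disjoint
  subtrees in all trees, and the least label of a block grows along inheritance edges, so the final
  partition is an acyclic agreement forest with \<open>|M| + 1\<close> components. Conversely, if the leaf
  ordering lists the components of an acyclic agreement forest \<open>F\<close> in a topological order of its
  inheritance graph, every mismatch is the first leaf of a component other than that of \<open>\<rho>\<close>,
  so \<open>|M| \<le> |F| - 1\<close>.\<close>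

section \<open>Binary trees: subtrees, restriction and isomorphism\<close>

abbreviation cl :: "'a btree \<Rightarrow> 'a set" where "cl w \<equiv> set (leaves w)"

lemma leaves_ne: "leaves t \<noteq> []"
  by (induction t) auto

lemma cl_ne: "cl t \<noteq> {}"
  using leaves_ne by (metis set_empty)

lemma cl_subset_disjoint: "cl t \<subseteq> A \<Longrightarrow> cl t \<subseteq> B \<Longrightarrow> A \<inter> B = {} \<Longrightarrow> False"
  using cl_ne[of t] by (metis disjoint_iff ex_in_conv subsetD)

lemma subtrees_self[simp]: "t \<in> subtrees t"
  by (cases t) auto

lemma subtrees_trans: "w \<in> subtrees v \<Longrightarrow> v \<in> subtrees t \<Longrightarrow> w \<in> subtrees t"
  by (induction t) auto

lemma cl_subtree: "w \<in> subtrees t \<Longrightarrow> cl w \<subseteq> cl t"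
  by (induction t) auto

lemma length_leaves_subtree: "w \<in> subtrees t \<Longrightarrow> w \<noteq> t \<Longrightarrow> length (leaves w) < length (leaves t)"
proof (induction t)
  case (Leaf x) then show ?case by simp
next
  case (Node l r)
  have "length (leaves l) \<ge> 1" "length (leaves r) \<ge> 1" using leaves_ne
    by (simp_all add: Suc_le_eq)
  show ?case
  proof (cases "w = Node l r")
    case True then show ?thesis using Node.prems by simp
  next
    case False
    then have "w \<in> subtrees l \<or> w \<in> subtrees r" using Node.prems by simp
    then show ?thesis
    proof
      assume a: "w \<in> subtrees l"
      have "length (leaves w) \<le> length (leaves l)"
        using Node.IH(1)[OF a] by (cases "w = l") auto
      then show ?thesis using \<open>length (leaves r) \<ge> 1\<close> by simp
    next
      assume a: "w \<in> subtrees r"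
      have "length (leaves w) \<le> length (leaves r)"
        using Node.IH(2)[OF a] by (cases "w = r") auto
      then show ?thesis using \<open>length (leaves l) \<ge> 1\<close> by simp
    qed
  qed
qed

lemma subtrees_antisym: "w \<in> subtrees v \<Longrightarrow> v \<in> subtrees w \<Longrightarrow> w = v"
  using length_leaves_subtree by (metis order.asym)

lemma distinct_leaves_subtree: "distinct (leaves t) \<Longrightarrow> w \<in> subtrees t \<Longrightarrow> distinct (leaves w)"
  by (induction t) auto

lemma Leaf_in_subtrees_iff: "x \<in> cl t \<longleftrightarrow> Leaf x \<in> subtrees t"
  by (induction t) auto

lemma subtrees_laminar:
  "distinct (leaves t) \<Longrightarrow> w1 \<in> subtrees t \<Longrightarrow> w2 \<in> subtrees t \<Longrightarrow> cl w1 \<inter> cl w2 \<noteq> {}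
   \<Longrightarrow> w1 \<in> subtrees w2 \<or> w2 \<in> subtrees w1"
proof (induction t)
  case (Leaf x) then show ?case by simp
next
  case (Node l r)
  have dl: "distinct (leaves l)" and dr: "distinct (leaves r)" and dj: "cl l \<inter> cl r = {}"
    using Node.prems(1) by auto
  show ?case
  proof (cases "w1 = Node l r \<or> w2 = Node l r")
    case True then show ?thesis using Node.prems by auto
  next
    case False
    then have "w1 \<in> subtrees l \<union> subtrees r" "w2 \<in> subtrees l \<union> subtrees r" using Node.prems by auto
    moreover have "\<not> (w1 \<in> subtrees l \<and> w2 \<in> subtrees r)"
      using dj Node.prems(4) cl_subtree[of w1 l] cl_subtree[of w2 r] by blast
    moreover have "\<not> (w1 \<in> subtrees r \<and> w2 \<in> subtrees l)"
      using dj Node.prems(4) cl_subtree[of w1 r] cl_subtree[of w2 l] by blast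
    ultimately show ?thesis
      using Node.IH(1)[OF dl _ _ Node.prems(4)] Node.IH(2)[OF dr _ _ Node.prems(4)] by blast
  qed
qed

lemma subtree_if_cl_subset:
  assumes "distinct (leaves t)" "w1 \<in> subtrees t" "w2 \<in> subtrees t" "cl w1 \<subseteq> cl w2"
  shows "w1 \<in> subtrees w2"
proof -
  obtain y where "y \<in> cl w1" using leaves_ne[of w1] by (cases "leaves w1") auto
  then have "cl w1 \<inter> cl w2 \<noteq> {}" using assms(4) by auto
  then have "w1 \<in> subtrees w2 \<or> w2 \<in> subtrees w1" using subtrees_laminar assms by blast
  moreover have "w2 \<in> subtrees w1 \<Longrightarrow> w1 = w2"
  proof -
    assume a: "w2 \<in> subtrees w1"
    have d1: "distinct (leaves w1)" using distinct_leaves_subtree assms by blast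
    have "cl w1 = cl w2" using cl_subtree[OF a] assms(4) by blast
    show "w1 = w2"
    proof (rule ccontr)
      assume "w1 \<noteq> w2"
      then have "w2 \<noteq> w1" by simp
      have "length (leaves w2) < length (leaves w1)" using length_leaves_subtree a \<open>w2 \<noteq> w1\<close> by blast
      moreover have "distinct (leaves w2)" using d1 a distinct_leaves_subtree by blast
      ultimately show False using d1 \<open>cl w1 = cl w2\<close>
        by (metis distinct_card less_irrefl)
    qed
  qed
  ultimately show ?thesis by auto
qed

lemma Node_in_subtrees_if_cl_meets_children:
  assumes d: "distinct (leaves t)" and w: "w \<in> subtrees t" "w = Node wa wb \<or> w = Node wb wa"
    and w': "w' \<in> subtrees t" and yz: "y \<in> cl wa" "z \<in> cl wb" "y \<in> cl w'" "z \<in> cl w'"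
  shows "w \<in> subtrees w'"
proof -
  have "cl wa \<inter> cl wb = {}" using distinct_leaves_subtree[OF d w(1)] w(2) by auto
  then have "w' \<notin> subtrees wa" "w' \<notin> subtrees wb" using yz cl_subtree by blast+
  moreover have "cl w \<inter> cl w' \<noteq> {}" using w(2) yz by auto
  then have "w \<in> subtrees w' \<or> w' \<in> subtrees w" using subtrees_laminar[OF d w(1) w'] by blast
  ultimately show ?thesis using w(2) by auto
qed

lemma lca_exists:
  assumes d: "distinct (leaves t)" and X: "X \<subseteq> cl t" "X \<noteq> {}"
  shows "\<exists>h\<in>subtrees t. X \<subseteq> cl h \<and> (\<forall>w\<in>subtrees t. X \<subseteq> cl w \<longrightarrow> h \<in> subtrees w)"
proof -
  let ?P = "\<lambda>w. w \<in> subtrees t \<and> X \<subseteq> cl w"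
  have "?P t" using X by simp
  then obtain h where h: "?P h" "\<forall>w. ?P w \<longrightarrow> length (leaves h) \<le> length (leaves w)"
    using ex_has_least_nat[of ?P t "\<lambda>w. length (leaves w)"] by blast
  have "\<forall>w\<in>subtrees t. X \<subseteq> cl w \<longrightarrow> h \<in> subtrees w"
  proof (intro ballI impI)
    fix w assume w: "w \<in> subtrees t" "X \<subseteq> cl w"
    have "cl h \<inter> cl w \<noteq> {}" using h(1) w(2) X(2) by blast
    then have "h \<in> subtrees w \<or> w \<in> subtrees h" using subtrees_laminar[OF d] h(1) w(1) by blast
    then show "h \<in> subtrees w"
    proof
      assume "w \<in> subtrees h"
      moreover have "\<not> length (leaves w) < length (leaves h)" using h(2) w by (simp add: not_less)
      ultimately have "w = h" using length_leaves_subtree by blast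
      then show ?thesis by simp
    qed
  qed
  then show ?thesis using h(1) by blast
qed

lemma restrict_None: "restrict S t = None \<longleftrightarrow> cl t \<inter> S = {}"
  by (induction t) (auto split: option.splits)

lemma restrict_leaves: "restrict S t = Some u \<Longrightarrow> leaves u = filter (\<lambda>x. x \<in> S) (leaves t)"
proof (induction t arbitrary: u)
  case (Leaf x) then show ?case by (auto split: if_splits)
next
  case (Node l r)
  show ?case
  proof (cases "restrict S l")
    case None
    then have "filter (\<lambda>x. x \<in> S) (leaves l) = []" using restrict_None[of S l]
      by (simp add: filter_empty_conv disjoint_iff)
    then show ?thesis using Node None by simp
  next
    case (Some a)
    show ?thesis
    proof (cases "restrict S r")
      case None
      then have "filter (\<lambda>x. x \<in> S) (leaves r) = []" using restrict_None[of S r]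
        by (simp add: filter_empty_conv disjoint_iff)
      then show ?thesis using Node Some None by simp
    next
      case (Some b)
      then show ?thesis using Node \<open>restrict S l = Some a\<close> by auto
    qed
  qed
qed

lemma restrict_cl: "restrict S t = Some u \<Longrightarrow> cl u = cl t \<inter> S"
  using restrict_leaves by fastforce

lemma restrict_distinct: "restrict S t = Some u \<Longrightarrow> distinct (leaves t) \<Longrightarrow> distinct (leaves u)"
  using restrict_leaves by fastforce

lemma restrict_single: "distinct (leaves t) \<Longrightarrow> cl t \<inter> S = {x} \<Longrightarrow> restrict S t = Some (Leaf x)"
proof (induction t)
  case (Leaf y)
  then have "y = x" "y \<in> S" by (simp_all add: Int_insert_left split: if_splits)
  then show ?case by simp
next
  case (Node l r)
  have dj: "cl l \<inter> cl r = {}" using Node.prems by auto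
  show ?case
  proof (cases "x \<in> cl l")
    case True
    then have "cl l \<inter> S = {x}" "cl r \<inter> S = {}" using Node.prems dj by auto
    then show ?thesis using Node.IH(1) Node.prems restrict_None[of S r] by auto
  next
    case False
    then have "cl r \<inter> S = {x}" "cl l \<inter> S = {}" using Node.prems dj by auto
    then show ?thesis using Node.IH(2) Node.prems restrict_None[of S l] by auto
  qed
qed

lemma restrict_eq_NodeD:
  "restrict S t = Some (Node u1 u2) \<Longrightarrow>
   \<exists>wa wb. Node wa wb \<in> subtrees t \<and> restrict S wa = Some u1 \<and> restrict S wb = Some u2 \<and>
     cl t \<inter> S \<subseteq> cl (Node wa wb)"
proof (induction t)
  case (Leaf x) then show ?case by (auto split: if_splits)
next
  case (Node l r)
  show ?case
  proof (cases "restrict S l")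
    case None
    then have "cl l \<inter> S = {}" by (metis restrict_None)
    then show ?thesis using Node.IH(2) Node.prems None by fastforce
  next
    case (Some a)
    show ?thesis
    proof (cases "restrict S r")
      case None
      then have "cl r \<inter> S = {}" by (metis restrict_None)
      then show ?thesis using Node.IH(1) Node.prems None Some by fastforce
    next
      case (Some b)
      then show ?thesis using Node.prems \<open>restrict S l = Some a\<close> by auto
    qed
  qed
qed

lemma restrict_eq_subtree:
  "distinct (leaves t) \<Longrightarrow> w \<in> subtrees t \<Longrightarrow> cl t \<inter> K \<subseteq> cl w \<Longrightarrow> restrict K t = restrict K w"
proof (induction t)
  case (Leaf x) then show ?case by auto
next
  case (Node l r)
  have dj: "cl l \<inter> cl r = {}" and dl: "distinct (leaves l)" and dr: "distinct (leaves r)"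
    using Node.prems by auto
  show ?case
  proof (cases "w = Node l r")
    case True then show ?thesis by simp
  next
    case False
    then have "w \<in> subtrees l \<or> w \<in> subtrees r" using Node.prems by auto
    then show ?thesis
    proof
      assume a: "w \<in> subtrees l"
      then have "cl r \<inter> K = {}" using cl_subtree[OF a] dj Node.prems(3) by auto
      then have "restrict K r = None" by (metis restrict_None)
      moreover have "restrict K l = restrict K w"
        using Node.IH(1)[OF dl a] Node.prems(3) by auto
      ultimately show ?thesis by (simp split: option.splits)
    next
      assume a: "w \<in> subtrees r"
      then have "cl l \<inter> K = {}" using cl_subtree[OF a] dj Node.prems(3) by auto
      then have "restrict K l = None" by (metis restrict_None)
      moreover have "restrict K r = restrict K w"
        using Node.IH(2)[OF dr a] Node.prems(3) by auto
      ultimately show ?thesis by (simp split: option.splits)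
    qed
  qed
qed

lemma restrict_restrict:
  "restrict S t = Some u \<Longrightarrow> restrict S' u = restrict (S \<inter> S') t"
proof (induction t arbitrary: u)
  case (Leaf x) then show ?case by (auto split: if_splits)
next
  case (Node l r)
  show ?case
  proof (cases "restrict S l")
    case None
    then have "cl l \<inter> S = {}" by (metis restrict_None)
    then have "cl l \<inter> (S \<inter> S') = {}" by blast
    then have "restrict (S \<inter> S') l = None" by (metis restrict_None)
    then show ?thesis using Node None by simp
  next
    case (Some a)
    show ?thesis
    proof (cases "restrict S r")
      case None
      then have "cl r \<inter> S = {}" by (metis restrict_None)
      then have "cl r \<inter> (S \<inter> S') = {}" by blast
      then have "restrict (S \<inter> S') r = None" by (metis restrict_None)
      then show ?thesis using Node None Some by (simp split: option.splits)
    next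
      case (Some b)
      then show ?thesis using Node \<open>restrict S l = Some a\<close> by (auto split: option.splits)
    qed
  qed
qed

lemma restrict_subtree_in_subtrees:
  "w \<in> subtrees t \<Longrightarrow> restrict K t = Some u \<Longrightarrow> restrict K w = Some z \<Longrightarrow> z \<in> subtrees u"
proof (induction t arbitrary: u)
  case (Leaf y) then show ?case by auto
next
  case (Node l r)
  have cw: "cl w \<inter> K \<noteq> {}" using Node.prems(3) restrict_None by (metis option.distinct(1))
  show ?case
  proof (cases "w = Node l r")
    case True then show ?thesis using Node.prems by simp
  next
    case False
    then have "w \<in> subtrees l \<or> w \<in> subtrees r" using Node.prems(1) by auto
    then show ?thesis
    proof
      assume wl: "w \<in> subtrees l"
      then have "cl l \<inter> K \<noteq> {}" using cw cl_subtree by blast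
      then obtain ul where ul: "restrict K l = Some ul" using restrict_None by (metis not_Some_eq)
      have "z \<in> subtrees ul" using Node.IH(1)[OF wl ul Node.prems(3)] .
      moreover have "u = ul \<or> (\<exists>ur. u = Node ul ur)" using Node.prems(2) ul by (auto split: option.splits)
      ultimately show ?thesis by auto
    next
      assume wr: "w \<in> subtrees r"
      then have "cl r \<inter> K \<noteq> {}" using cw cl_subtree by blast
      then obtain ur where ur: "restrict K r = Some ur" using restrict_None by (metis not_Some_eq)
      have "z \<in> subtrees ur" using Node.IH(2)[OF wr ur Node.prems(3)] .
      moreover have "u = ur \<or> (\<exists>ul. u = Node ul ur)" using Node.prems(2) ur by (auto split: option.splits)
      ultimately show ?thesis by auto
    qed
  qed
qed

lemma restrict_Some: "x \<in> cl t \<Longrightarrow> x \<in> K \<Longrightarrow> \<exists>u. restrict K t = Some u"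
  using restrict_None[of K t] by (cases "restrict K t") auto

lemma biso_refl[simp]: "biso t t"
  by (induction t) auto

lemma biso_sym: "biso a b \<Longrightarrow> biso b a"
  by (induction a b rule: biso.induct) auto

lemma biso_trans: "biso a b \<Longrightarrow> biso b c \<Longrightarrow> biso a c"
proof (induction a b arbitrary: c rule: biso.induct)
  case (1 a b) then show ?case by (cases c) auto
next
  case (2 l r l' r')
  obtain l'' r'' where c: "c = Node l'' r''" using "2.prems"(2) by (cases c) auto
  have h: "(biso l' l'' \<and> biso r' r'') \<or> (biso l' r'' \<and> biso r' l'')" using "2.prems" c by simp
  have h0: "(biso l l' \<and> biso r r') \<or> (biso l r' \<and> biso r l')" using "2.prems"(1) by simp
  from h0 h show ?case
  proof (elim disjE conjE)
    assume "biso l l'" "biso r r'" "biso l' l''" "biso r' r''"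
    then show ?thesis using "2.IH"(1,2) c by auto
  next
    assume "biso l l'" "biso r r'" "biso l' r''" "biso r' l''"
    then show ?thesis using "2.IH"(1,2) c by auto
  next
    assume "biso l r'" "biso r l'" "biso l' l''" "biso r' r''"
    then show ?thesis using "2.IH"(3,4) c by auto
  next
    assume "biso l r'" "biso r l'" "biso l' r''" "biso r' l''"
    then show ?thesis using "2.IH"(3,4) c by auto
  qed
qed auto

lemma biso_cl: "biso a b \<Longrightarrow> cl a = cl b"
  by (induction a b rule: biso.induct) auto

lemma biso_len: "biso a b \<Longrightarrow> length (leaves a) = length (leaves b)"
  by (induction a b rule: biso.induct) auto

lemma biso_distinct: "biso a b \<Longrightarrow> distinct (leaves a) \<Longrightarrow> distinct (leaves b)"
  using biso_len biso_cl by (metis card_distinct distinct_card)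

lemma biso_mu: "biso a b \<Longrightarrow> mu \<sigma> a = mu \<sigma> b"
  unfolding mu_def using biso_cl by metis

lemma biso_oidx: "biso a b \<Longrightarrow> oidx \<sigma> a = oidx \<sigma> b"
  by (induction a b rule: biso.induct) (auto simp: biso_mu)

lemma biso_subtree: "biso u v \<Longrightarrow> z \<in> subtrees u \<Longrightarrow> \<exists>z'\<in>subtrees v. biso z z'"
proof (induction u v rule: biso.induct)
  case (1 a b) then show ?case by auto
next
  case (2 l r l' r')
  have h0: "(biso l l' \<and> biso r r') \<or> (biso l r' \<and> biso r l')" using "2.prems"(1) by simp
  have "z = Node l r \<or> z \<in> subtrees l \<or> z \<in> subtrees r" using "2.prems"(2) by auto
  then show ?case
  proof (elim disjE)
    assume "z = Node l r" then show ?thesis using "2.prems"(1) by (intro bexI[of _ "Node l' r'"]) auto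
  next
    assume z: "z \<in> subtrees l"
    from h0 show ?thesis
    proof
      assume "biso l l' \<and> biso r r'"
      then show ?thesis using "2.IH"(1)[OF _ z] by auto
    next
      assume "biso l r' \<and> biso r l'"
      then show ?thesis using "2.IH"(3)[OF _ z] by auto
    qed
  next
    assume z: "z \<in> subtrees r"
    from h0 show ?thesis
    proof
      assume "biso l l' \<and> biso r r'"
      then show ?thesis using "2.IH"(2)[OF _ z] by auto
    next
      assume "biso l r' \<and> biso r l'"
      then show ?thesis using "2.IH"(4)[OF _ z] by auto
    qed
  qed
qed auto

definition join_opt :: "'a btree option \<Rightarrow> 'a btree option \<Rightarrow> 'a btree option" where
  "join_opt x y = (case x of None \<Rightarrow> y | Some a \<Rightarrow> (case y of None \<Rightarrow> Some a | Some b \<Rightarrow> Some (Node a b)))"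

lemma restrict_Node_join_opt: "restrict S (Node l r) = join_opt (restrict S l) (restrict S r)"
  by (simp add: join_opt_def)

lemma rel_option_join_opt: "rel_option biso x x' \<Longrightarrow> rel_option biso y y' \<Longrightarrow> rel_option biso (join_opt x y) (join_opt x' y')"
  by (cases x; cases x'; cases y; cases y') (auto simp: join_opt_def)

lemma rel_option_join_opt_swap: "rel_option biso x y' \<Longrightarrow> rel_option biso y x' \<Longrightarrow> rel_option biso (join_opt x y) (join_opt x' y')"
  by (cases x; cases x'; cases y; cases y') (auto simp: join_opt_def)

lemma rel_option_biso_restrict: "biso u1 u2 \<Longrightarrow> rel_option biso (restrict S u1) (restrict S u2)"
proof (induction u1 u2 rule: biso.induct)
  case (1 a b) then show ?case by auto
next
  case (2 l r l' r')
  have h0: "(biso l l' \<and> biso r r') \<or> (biso l r' \<and> biso r l')" using "2.prems"(1) by simp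
  from h0 show ?case
  proof
    assume "biso l l' \<and> biso r r'"
    then show ?thesis using "2.IH"(1,2) rel_option_join_opt restrict_Node_join_opt by metis
  next
    assume "biso l r' \<and> biso r l'"
    then show ?thesis using "2.IH"(3,4) rel_option_join_opt_swap restrict_Node_join_opt by metis
  qed
qed auto

lemma restrict_cong: "cl t \<inter> S = cl t \<inter> S' \<Longrightarrow> restrict S t = restrict S' t"
proof (induction t)
  case (Leaf x) then show ?case by auto
next
  case (Node l r)
  have "cl l \<inter> S = cl l \<inter> S'" "cl r \<inter> S = cl r \<inter> S'" using Node.prems by auto
  then have "restrict S l = restrict S' l" "restrict S r = restrict S' r" using Node.IH by blast+
  then show ?case by (simp only: restrict.simps)
qed

lemma sibling_None_iff: "sibling x u = None \<longleftrightarrow> (x \<notin> cl u \<or> u = Leaf x)"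
proof (induction u)
  case (Leaf y) then show ?case by auto
next
  case (Node l r)
  then show ?case by (auto split: option.splits)
qed

lemma sibling_SomeD: "sibling x u = Some s \<Longrightarrow> Node (Leaf x) s \<in> subtrees u \<or> Node s (Leaf x) \<in> subtrees u"
  by (induction u) (auto split: if_splits option.splits)

lemma sibling_eq_if_cherry:
  assumes "distinct (leaves u)" "Node (Leaf x) s \<in> subtrees u \<or> Node s (Leaf x) \<in> subtrees u"
  shows "sibling x u = Some s"
  using assms
proof (induction u)
  case (Node a b)
  have d: "distinct (leaves a)" "distinct (leaves b)" "cl a \<inter> cl b = {}" using Node.prems(1) by auto
  have leaf: "Leaf x \<in> subtrees (Node (Leaf x) s)" "Leaf x \<in> subtrees (Node s (Leaf x))" by simp_all
  consider "Node a b = Node (Leaf x) s" | "Node a b = Node s (Leaf x)"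
    | "Node (Leaf x) s \<in> subtrees a \<or> Node s (Leaf x) \<in> subtrees a"
    | "Node (Leaf x) s \<in> subtrees b \<or> Node s (Leaf x) \<in> subtrees b"
    using Node.prems(2) by auto
  then show ?case
  proof cases
    case 2
    then have "a \<noteq> Leaf x" using Node.prems(1) by auto
    then show ?thesis using 2 by simp
  next
    case 3
    then have "Leaf x \<in> subtrees a" using leaf subtrees_trans[of "Leaf x" _ a] by blast
    then have "x \<in> cl a" using Leaf_in_subtrees_iff[of x a] by simp
    then have "x \<notin> cl b" "a \<noteq> Leaf x" using d(3) 3 by auto
    moreover have "sibling x a = Some s" using Node.IH(1)[OF d(1) 3] .
    ultimately show ?thesis by (cases b) auto
  next
    case 4
    then have "Leaf x \<in> subtrees b" using leaf subtrees_trans[of "Leaf x" _ b] by blast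
    then have "x \<in> cl b" using Leaf_in_subtrees_iff[of x b] by simp
    then have "x \<notin> cl a" "b \<noteq> Leaf x" using d(3) 4 by auto
    moreover have "sibling x b = Some s" using Node.IH(2)[OF d(2) 4] .
    moreover have "sibling x a = None" using \<open>x \<notin> cl a\<close> sibling_None_iff[of x a] by simp
    ultimately show ?thesis by (cases a) auto
  qed simp
qed simp

lemma sibling_biso:
  assumes "biso u1 u2" "distinct (leaves u1)" "sibling x u1 = Some s1"
  shows "\<exists>s2. sibling x u2 = Some s2 \<and> biso s1 s2"
proof -
  have leaf: "biso (Leaf x) v \<Longrightarrow> v = Leaf x" for v by (cases v) auto
  obtain c where c: "c \<in> subtrees u1" "c = Node (Leaf x) s1 \<or> c = Node s1 (Leaf x)"
    using sibling_SomeD[OF assms(3)] by blast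
  obtain c' where c': "c' \<in> subtrees u2" "biso c c'" using biso_subtree[OF assms(1) c(1)] by blast
  then obtain s2 where "c' = Node (Leaf x) s2 \<or> c' = Node s2 (Leaf x)" "biso s1 s2"
  proof (cases c')
    case (Node p q)
    then have "(p = Leaf x \<and> biso s1 q) \<or> (q = Leaf x \<and> biso s1 p)"
      using c(2) c'(2) by (auto dest!: leaf)
    then show ?thesis using that[of q] that[of p] Node by blast
  qed (use c(2) c'(2) in auto)
  then show ?thesis
    using sibling_eq_if_cherry[OF biso_distinct[OF assms(1,2)]] c'(1) by auto
qed

text \<open>The lowest vertex above \<open>x\<close> and another leaf of \<open>S\<close> is the one at which \<open>x\<close> hangs in the
  restriction to \<open>S\<close>.\<close>

lemma lowest_vertex_above_two:
  assumes d: "distinct (leaves t)" and x: "x \<in> cl t" and S: "cl t \<inter> (S - {x}) \<noteq> {}"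
  obtains A a b where "A \<in> subtrees t" "A = Node a b \<or> A = Node b a" "x \<in> cl a" "cl a \<inter> (S - {x}) = {}"
    "cl b \<inter> S \<noteq> {}" "\<forall>w\<in>subtrees t. x \<in> cl w \<and> cl w \<inter> (S - {x}) \<noteq> {} \<longrightarrow> A \<in> subtrees w"
proof -
  let ?P = "\<lambda>w. w \<in> subtrees t \<and> x \<in> cl w \<and> cl w \<inter> (S - {x}) \<noteq> {}"
  obtain A where A: "?P A" "\<forall>w. ?P w \<longrightarrow> length (leaves A) \<le> length (leaves w)"
    using ex_has_least_nat[of ?P t "\<lambda>w. length (leaves w)"] x S by auto
  have low: "A \<in> subtrees w" if "?P w" for w
  proof -
    have "A \<in> subtrees w \<or> w \<in> subtrees A" using subtrees_laminar[OF d] A(1) that by blast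
    then show ?thesis using A(2) that length_leaves_subtree by (metis not_less)
  qed
  obtain y where y: "y \<in> cl A" "y \<in> S" "y \<noteq> x" using A(1) by blast
  then obtain a b where ab: "A = Node a b \<or> A = Node b a" "x \<in> cl a"
    using A(1) by (cases A) auto
  have "a \<in> subtrees t" using ab A(1) subtrees_trans[of a A t] by auto
  moreover have "A \<notin> subtrees a" using ab length_leaves_subtree[of a A] leaves_ne subtrees_antisym by fastforce
  ultimately have a: "cl a \<inter> (S - {x}) = {}" using low ab(2) by blast
  then have "y \<in> cl b" using y ab by auto
  then show ?thesis using that A(1) ab a low y(2) by blast
qed

lemma sibling_restrict_lowest:
  assumes d: "distinct (leaves t)" and x: "x \<in> cl t" "x \<in> S" and S: "cl t \<inter> (S - {x}) \<noteq> {}"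
  shows "\<exists>A a b. A \<in> subtrees t \<and> (A = Node a b \<or> A = Node b a) \<and> x \<in> cl a \<and> cl a \<inter> S = {x} \<and>
     cl b \<inter> S \<noteq> {} \<and> sibling x (the (restrict S t)) = restrict S b \<and>
     (\<forall>w\<in>subtrees t. x \<in> cl w \<and> cl w \<inter> (S - {x}) \<noteq> {} \<longrightarrow> A \<in> subtrees w)"
proof -
  obtain A a b where A: "A \<in> subtrees t" "A = Node a b \<or> A = Node b a" "x \<in> cl a"
    "cl a \<inter> (S - {x}) = {}" "cl b \<inter> S \<noteq> {}" "\<forall>w\<in>subtrees t. x \<in> cl w \<and> cl w \<inter> (S - {x}) \<noteq> {} \<longrightarrow> A \<in> subtrees w"
    using lowest_vertex_above_two[OF d x(1) S] by blast
  have dA: "distinct (leaves A)" using distinct_leaves_subtree[OF d A(1)] .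
  have a: "cl a \<inter> S = {x}" using A(3,4) x(2) by blast
  have ra: "restrict S a = Some (Leaf x)" using restrict_single[OF _ a] dA A(2) by auto
  obtain z where z: "restrict S b = Some z" using A(5) restrict_None by (metis not_Some_eq)
  obtain u where u: "restrict S t = Some u" using restrict_Some[OF x] by blast
  have "restrict S A = Some (Node (Leaf x) z) \<or> restrict S A = Some (Node z (Leaf x))"
    using A(2) ra z by auto
  then have "Node (Leaf x) z \<in> subtrees u \<or> Node z (Leaf x) \<in> subtrees u"
    using restrict_subtree_in_subtrees[OF A(1) u] by blast
  then have "sibling x (the (restrict S t)) = restrict S b"
    using sibling_eq_if_cherry[OF restrict_distinct[OF u d]] u z by simp
  then show ?thesis using A a by blast
qed

lemma mu_in: "mu \<sigma> t \<in> \<sigma> ` cl t"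
  unfolding mu_def using cl_ne by (intro Min_in) auto

lemma mu_le: "y \<in> cl t \<Longrightarrow> mu \<sigma> t \<le> \<sigma> y"
  unfolding mu_def by (intro Min_le) auto

lemma oidx_NodeE:
  assumes "distinct (leaves (Node a b))" "inj_on \<sigma> (cl (Node a b))"
  shows "\<exists>q y z. oidx \<sigma> (Node a b) = - int q \<and> y \<in> cl (Node a b) \<and> \<sigma> y = q \<and>
     z \<in> cl (Node a b) \<and> \<sigma> z < q \<and> q = max (mu \<sigma> a) (mu \<sigma> b)"
proof -
  obtain ya where ya: "ya \<in> cl a" "\<sigma> ya = mu \<sigma> a" using mu_in by (metis imageE)
  obtain yb where yb: "yb \<in> cl b" "\<sigma> yb = mu \<sigma> b" using mu_in by (metis imageE)
  have "ya \<noteq> yb" using assms(1) ya yb by auto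
  have ne: "\<sigma> ya \<noteq> \<sigma> yb" by (rule inj_on_contraD[OF assms(2) \<open>ya \<noteq> yb\<close>]) (use ya yb in auto)
  have o: "oidx \<sigma> (Node a b) = - int (max (mu \<sigma> a) (mu \<sigma> b))" by simp
  show ?thesis
  proof (cases "\<sigma> ya < \<sigma> yb")
    case True
    then have "max (mu \<sigma> a) (mu \<sigma> b) = \<sigma> yb" using ya yb by simp
    then show ?thesis using o ya yb True
      by (intro exI[of _ "max (mu \<sigma> a) (mu \<sigma> b)"] exI[of _ yb] exI[of _ ya]) simp
  next
    case False
    then have lt: "\<sigma> yb < \<sigma> ya" using ne by simp
    then have "max (mu \<sigma> a) (mu \<sigma> b) = \<sigma> ya" using ya yb by simp
    then show ?thesis using o ya yb lt
      by (intro exI[of _ "max (mu \<sigma> a) (mu \<sigma> b)"] exI[of _ ya] exI[of _ yb]) simp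
  qed
qed

lemma oidx_abs_label: "inj_on \<sigma> (cl u) \<Longrightarrow> distinct (leaves u) \<Longrightarrow>
   \<exists>y\<in>cl u. int (\<sigma> y) = \<bar>oidx \<sigma> u\<bar>"
proof (cases u)
  case (Leaf x) then show ?thesis by simp
next
  case (Node a b)
  assume "inj_on \<sigma> (cl u)" "distinct (leaves u)"
  then show ?thesis using oidx_NodeE[of a b \<sigma>] Node by fastforce
qed

text \<open>In a proper internal subtree \<open>w1\<close> of \<open>w2\<close>, the leaf realising the index of \<open>w1\<close> lies in the
  child of \<open>w2\<close> that also holds a smaller leaf, so it cannot realise the index of \<open>w2\<close>.\<close>

lemma oidx_proper_subtree_neq:
  assumes d: "distinct (leaves (Node g h))" and inj: "inj_on \<sigma> (cl (Node g h))"
    and w1: "Node e f \<in> subtrees (Node g h)" "Node e f \<noteq> Node g h"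
  shows "oidx \<sigma> (Node e f) \<noteq> oidx \<sigma> (Node g h)"
proof
  assume eq: "oidx \<sigma> (Node e f) = oidx \<sigma> (Node g h)"
  have "distinct (leaves (Node e f))" "inj_on \<sigma> (cl (Node e f))"
    using distinct_leaves_subtree[OF d w1(1)] inj_on_subset[OF inj cl_subtree[OF w1(1)]] by auto
  then obtain p u v where p: "oidx \<sigma> (Node e f) = - int p" "u \<in> cl (Node e f)" "\<sigma> u = p"
      "v \<in> cl (Node e f)" "\<sigma> v < p"
    using oidx_NodeE by blast
  have max: "max (mu \<sigma> g) (mu \<sigma> h) = p" using eq p(1) by simp
  have "False" if c: "Node e f \<in> subtrees c" and co: "cl c \<inter> cl c' = {}" "max (mu \<sigma> c) (mu \<sigma> c') = p"
    and sub: "cl c \<union> cl c' = cl (Node g h)" for c c'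
  proof -
    have "cl (Node e f) \<subseteq> cl c" using cl_subtree[OF c] .
    then have "mu \<sigma> c < p" using mu_le[of v c \<sigma>] p(4,5) by auto
    then have "mu \<sigma> c' = p" using co(2) by (simp add: max_def split: if_splits)
    then obtain u' where "u' \<in> cl c'" "\<sigma> u' = p" using mu_in[of \<sigma> c'] by (metis imageE)
    moreover have "u \<in> cl c" using p(2) \<open>cl (Node e f) \<subseteq> cl c\<close> by blast
    ultimately have "u' = u" using inj_onD[OF inj] p(3) sub by blast
    then show False using \<open>u' \<in> cl c'\<close> \<open>u \<in> cl c\<close> co(1) by blast
  qed
  moreover have "Node e f \<in> subtrees g \<or> Node e f \<in> subtrees h" using w1 by auto
  moreover have "cl g \<inter> cl h = {}" using d by simp
  ultimately show False using max by (metis Int_commute Un_commute leaves.simps(2) max.commute set_append)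
qed

lemma oidx_Node_neg:
  assumes "distinct (leaves (Node a b))" "inj_on \<sigma> (cl (Node a b))"
  shows "oidx \<sigma> (Node a b) < 0"
  using oidx_NodeE[OF assms] by fastforce

lemma oidx_inj_subtrees:
  assumes d: "distinct (leaves t)" and inj: "inj_on \<sigma> (cl t)"
    and z: "z1 \<in> subtrees t" "z2 \<in> subtrees t" and eq: "oidx \<sigma> z1 = oidx \<sigma> z2"
  shows "z1 = z2"
proof -
  have dz: "distinct (leaves z1)" "distinct (leaves z2)" using d z distinct_leaves_subtree by blast+
  have iz: "inj_on \<sigma> (cl z1)" "inj_on \<sigma> (cl z2)" using inj z cl_subtree inj_on_subset by metis+
  show ?thesis
  proof (cases z1; cases z2)
    fix a b assume "z1 = Leaf a" "z2 = Leaf b"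
    then show ?thesis using eq inj_onD[OF inj] z cl_subtree by fastforce
  next
    fix a g h assume "z1 = Leaf a" "z2 = Node g h"
    then show ?thesis using eq oidx_Node_neg dz(2) iz(2) by fastforce
  next
    fix e f b assume "z1 = Node e f" "z2 = Leaf b"
    then show ?thesis using eq oidx_Node_neg dz(1) iz(1) by fastforce
  next
    fix e f g h assume N: "z1 = Node e f" "z2 = Node g h"
    obtain y1 where y1: "y1 \<in> cl z1" "int (\<sigma> y1) = \<bar>oidx \<sigma> z1\<bar>" using oidx_abs_label[OF iz(1) dz(1)] by blast
    obtain y2 where y2: "y2 \<in> cl z2" "int (\<sigma> y2) = \<bar>oidx \<sigma> z2\<bar>" using oidx_abs_label[OF iz(2) dz(2)] by blast
    have "y1 \<in> cl t" "y2 \<in> cl t" using y1(1) y2(1) z cl_subtree by blast+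
    then have "y1 = y2" using inj_onD[OF inj] y1(2) y2(2) eq by simp
    then have "z1 \<in> subtrees z2 \<or> z2 \<in> subtrees z1"
      using subtrees_laminar[OF d z] y1(1) y2(1) by blast
    then show ?thesis using oidx_proper_subtree_neq dz iz eq N by metis
  qed
qed

fun attach :: "'a \<Rightarrow> 'a btree \<Rightarrow> 'a btree \<Rightarrow> 'a btree" where
  "attach x z (Leaf y) = (if Leaf y = z then Node z (Leaf x) else Leaf y)"
| "attach x z (Node l r) = (if Node l r = z then Node z (Leaf x) else Node (attach x z l) (attach x z r))"

lemma attach_notin: "z \<notin> subtrees u \<Longrightarrow> attach x z u = u"
  by (induction u) auto

lemma attach_self: "attach x z z = Node z (Leaf x)"
  by (cases z) auto

lemma subtrees_Node_disjoint: "distinct (leaves (Node l r)) \<Longrightarrow> z \<in> subtrees l \<Longrightarrow> z \<notin> subtrees r"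
proof
  assume "distinct (leaves (Node l r))" "z \<in> subtrees l" "z \<in> subtrees r"
  then have "cl z \<subseteq> cl l" "cl z \<subseteq> cl r" "cl l \<inter> cl r = {}" using cl_subtree by auto
  then show False by (rule cl_subset_disjoint)
qed

lemma attach_Node_left:
  assumes "distinct (leaves (Node l r))" "z \<in> subtrees l"
  shows "attach x z (Node l r) = Node (attach x z l) r"
proof -
  have "z \<noteq> Node l r" using assms(2) length_leaves_subtree[of z l] leaves_ne[of r] by fastforce
  moreover have "z \<notin> subtrees r" using subtrees_Node_disjoint[OF assms] .
  ultimately show ?thesis using attach_notin[of z r] by simp
qed

lemma attach_Node_right:
  assumes "distinct (leaves (Node l r))" "z \<in> subtrees r"
  shows "attach x z (Node l r) = Node l (attach x z r)"
proof -
  have "distinct (leaves (Node r l))" using assms(1) by auto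
  then have "z \<notin> subtrees l" using subtrees_Node_disjoint assms(2) by blast
  moreover have "z \<noteq> Node l r" using assms(2) length_leaves_subtree[of z r] leaves_ne[of l] by fastforce
  ultimately show ?thesis using attach_notin[of z l] by simp
qed

lemma restrict_insert_attach:
  assumes "distinct (leaves t)" "A \<in> subtrees t" "A = Node a b \<or> A = Node b a" "x \<in> cl a"
    "cl a \<inter> insert x K = {x}" "cl b \<inter> K \<noteq> {}" "x \<notin> K"
  shows "\<exists>u z v. restrict K t = Some u \<and> restrict K b = Some z \<and>
     restrict (insert x K) t = Some v \<and> biso v (attach x z u)"
  using assms
proof (induction t)
  case (Leaf y)
  then show ?case by auto
next
  case (Node l r)
  have d: "distinct (leaves l)" "distinct (leaves r)" "cl l \<inter> cl r = {}" using Node.prems(1) by auto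
  have dA: "distinct (leaves A)" using Node.prems(1,2) distinct_leaves_subtree by blast
  have xb: "x \<notin> cl b" using dA Node.prems(3,4) by auto
  have aK: "cl a \<inter> K = {}" using Node.prems(5,7) by auto
  obtain z where z: "restrict K b = Some z" using Node.prems(6) restrict_None by (metis not_Some_eq)
  have bxK: "restrict (insert x K) b = Some z" using z restrict_cong[of b K "insert x K"] xb by auto
  show ?case
  proof (cases "A = Node l r")
    case True
    have "restrict K A = Some z"
      using Node.prems(3) z restrict_None[of K a] aK by (auto split: option.splits)
    moreover have "restrict (insert x K) a = Some (Leaf x)"
      using restrict_single[OF distinct_leaves_subtree[OF dA]] Node.prems(3,5) by auto
    then have "restrict (insert x K) A = Some (Node (Leaf x) z) \<or> restrict (insert x K) A = Some (Node z (Leaf x))"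
      using Node.prems(3) bxK by auto
    ultimately show ?thesis using True z attach_self[of x z] by auto
  next
    case False
    then have "A \<in> subtrees l \<or> A \<in> subtrees r" using Node.prems(2) by auto
    then show ?thesis
    proof
      assume Al: "A \<in> subtrees l"
      obtain u v where IH: "restrict K l = Some u" "restrict (insert x K) l = Some v" "biso v (attach x z u)"
        using Node.IH(1)[OF d(1) Al Node.prems(3-7)] z by auto
      have "x \<notin> cl r" using cl_subtree[OF Al] Node.prems(3,4) d(3) by auto
      then have rr: "restrict (insert x K) r = restrict K r" using restrict_cong[of r K "insert x K"] by auto
      have "b \<in> subtrees l" using Al Node.prems(3) subtrees_trans[of b A l] by auto
      then have "z \<in> subtrees u" using restrict_subtree_in_subtrees IH(1) z by blast
      show ?thesis
      proof (cases "restrict K r")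
        case (Some w)
        have du: "distinct (leaves (Node u w))" using restrict_distinct[OF _ Node.prems(1), of K] IH(1) Some by simp
        have "attach x z (Node u w) = Node (attach x z u) w" using attach_Node_left[OF du \<open>z \<in> subtrees u\<close>] .
        then show ?thesis using IH Some rr z by simp
      qed (use IH rr z in simp)
    next
      assume Ar: "A \<in> subtrees r"
      obtain u v where IH: "restrict K r = Some u" "restrict (insert x K) r = Some v" "biso v (attach x z u)"
        using Node.IH(2)[OF d(2) Ar Node.prems(3-7)] z by auto
      have "x \<notin> cl l" using cl_subtree[OF Ar] Node.prems(3,4) d(3) by auto
      then have rl: "restrict (insert x K) l = restrict K l" using restrict_cong[of l K "insert x K"] by auto
      have "b \<in> subtrees r" using Ar Node.prems(3) subtrees_trans[of b A r] by auto
      then have "z \<in> subtrees u" using restrict_subtree_in_subtrees IH(1) z by blast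
      show ?thesis
      proof (cases "restrict K l")
        case (Some w)
        have du: "distinct (leaves (Node w u))" using restrict_distinct[OF _ Node.prems(1), of K] IH(1) Some by simp
        have "attach x z (Node w u) = Node w (attach x z u)" using attach_Node_right[OF du \<open>z \<in> subtrees u\<close>] .
        then show ?thesis using IH Some rl z by simp
      qed (use IH rl z in simp)
    qed
  qed
qed

lemma children_unique:
  assumes "A = Node a b \<or> A = Node b a" "A = Node a' b' \<or> A = Node b' a'" "x \<in> cl a" "x \<in> cl a'"
    "distinct (leaves A)"
  shows "a = a' \<and> b = b'"
proof -
  have dj: "cl a \<inter> cl b = {}" using assms(1,5) by auto
  show ?thesis using assms(1,2) assms(3,4) dj by auto
qed

text \<open>The index of a vertex determines it, so isomorphic trees attach a leaf at corresponding places.\<close>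

lemma biso_attach:
  "biso u1 u2 \<Longrightarrow> distinct (leaves u1) \<Longrightarrow> inj_on \<sigma> (cl u1) \<Longrightarrow> z1 \<in> subtrees u1 \<Longrightarrow>
   z2 \<in> subtrees u2 \<Longrightarrow> oidx \<sigma> z1 = oidx \<sigma> z2 \<Longrightarrow> biso (attach x z1 u1) (attach x z2 u2)"
proof (induction u1 u2 arbitrary: z1 z2 rule: biso.induct)
  case (2 l r l' r')
  let ?u1 = "Node l r" and ?u2 = "Node l' r'"
  have d2: "distinct (leaves ?u2)" using biso_distinct "2.prems"(1,2) by blast
  have i2: "inj_on \<sigma> (cl ?u2)" using biso_cl "2.prems"(1,3) by metis
  have o12: "oidx \<sigma> ?u1 = oidx \<sigma> ?u2" using biso_oidx "2.prems"(1) by blast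
  have dl: "distinct (leaves l)" "distinct (leaves r)" using "2.prems"(2) by auto
  have il: "inj_on \<sigma> (cl l)" "inj_on \<sigma> (cl r)" using "2.prems"(3) inj_on_subset by fastforce+
  have root: "z1 = ?u1 \<longleftrightarrow> z2 = ?u2"
    using oidx_inj_subtrees[OF d2 i2 "2.prems"(5)] oidx_inj_subtrees[OF "2.prems"(2,3,4)] o12 "2.prems"(6)
    by (metis subtrees_self)
  show ?case
  proof (cases "z1 = ?u1")
    case True
    then show ?thesis using root attach_self "2.prems"(1) by simp
  next
    case False
    have follow: "z2 \<in> subtrees v'" if v: "z1 \<in> subtrees v" "biso v v'" "v' \<in> subtrees ?u2" for v v'
    proof -
      obtain z1' where z1': "z1' \<in> subtrees v'" "biso z1 z1'" using biso_subtree v(1,2) by blast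
      have "oidx \<sigma> z1' = oidx \<sigma> z2" using biso_oidx z1'(2) "2.prems"(6) by metis
      then have "z1' = z2" using oidx_inj_subtrees[OF d2 i2 _ "2.prems"(5)] z1'(1) v(3) subtrees_trans by blast
      then show ?thesis using z1' by simp
    qed
    have z1: "z1 \<in> subtrees l \<or> z1 \<in> subtrees r" using "2.prems"(4) False by auto
    have "(biso l l' \<and> biso r r') \<or> (biso l r' \<and> biso r l')" using "2.prems"(1) by simp
    then show ?thesis
    proof (elim disjE conjE)
      assume bb: "biso l l'" "biso r r'"
      from z1 show ?thesis
      proof
        assume z1l: "z1 \<in> subtrees l"
        then have z2: "z2 \<in> subtrees l'" using follow[OF _ bb(1)] by simp
        have "biso (attach x z1 l) (attach x z2 l')" by (rule "2.IH"(1)[OF bb(1) dl(1) il(1) z1l z2 "2.prems"(6)])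
        then show ?thesis
          using attach_Node_left[OF "2.prems"(2) z1l] attach_Node_left[OF d2 z2] bb(2) by (simp del: attach.simps)
      next
        assume z1r: "z1 \<in> subtrees r"
        then have z2: "z2 \<in> subtrees r'" using follow[OF _ bb(2)] by simp
        have "biso (attach x z1 r) (attach x z2 r')" by (rule "2.IH"(2)[OF bb(2) dl(2) il(2) z1r z2 "2.prems"(6)])
        then show ?thesis
          using attach_Node_right[OF "2.prems"(2) z1r] attach_Node_right[OF d2 z2] bb(1) by (simp del: attach.simps)
      qed
    next
      assume bb: "biso l r'" "biso r l'"
      from z1 show ?thesis
      proof
        assume z1l: "z1 \<in> subtrees l"
        then have z2: "z2 \<in> subtrees r'" using follow[OF _ bb(1)] by simp
        have "biso (attach x z1 l) (attach x z2 r')" by (rule "2.IH"(3)[OF bb(1) dl(1) il(1) z1l z2 "2.prems"(6)])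
        then show ?thesis
          using attach_Node_left[OF "2.prems"(2) z1l] attach_Node_right[OF d2 z2] bb(2) by (simp del: attach.simps)
      next
        assume z1r: "z1 \<in> subtrees r"
        then have z2: "z2 \<in> subtrees l'" using follow[OF _ bb(2)] by simp
        have "biso (attach x z1 r) (attach x z2 l')" by (rule "2.IH"(4)[OF bb(2) dl(2) il(2) z1r z2 "2.prems"(6)])
        then show ?thesis
          using attach_Node_right[OF "2.prems"(2) z1r] attach_Node_left[OF d2 z2] bb(1) by (simp del: attach.simps)
      qed
    qed
  qed
qed auto

section \<open>Leaf orderings, insertion vertices and OLA indices\<close>

locale ordered_trees =
  fixes \<rho> :: 'a and L :: "'a set" and Ts :: "'a btree set" and \<sigma> :: "'a \<Rightarrow> nat"
  assumes finL: "finite L" and rhoL: "\<rho> \<in> L" and trees: "\<forall>t\<in>Ts. is_tree \<rho> L t"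
    and leaf_ord: "leaf_ordering \<rho> L \<sigma>"
begin

definition n :: nat where "n = card (L - {\<rho>})"

definition pfx :: "nat \<Rightarrow> 'a set" where "pfx i = {x \<in> L - {\<rho>}. \<sigma> x \<le> i}"

abbreviation l :: "nat \<Rightarrow> 'a" where "l i \<equiv> lo \<rho> L \<sigma> i"

lemma sigma_bij: "bij_betw \<sigma> (L - {\<rho>}) {0..<n}"
  using leaf_ord unfolding leaf_ordering_def n_def by simp

lemma sigma_inj: "inj_on \<sigma> (L - {\<rho>})"
  using sigma_bij bij_betw_imp_inj_on by blast

lemma sigma_less: "x \<in> L - {\<rho>} \<Longrightarrow> \<sigma> x < n"
  using sigma_bij bij_betwE by fastforce

lemma l_in_sigma_l: "i < n \<Longrightarrow> l i \<in> L - {\<rho>} \<and> \<sigma> (l i) = i"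
proof -
  assume "i < n"
  then have "i \<in> \<sigma> ` (L - {\<rho>})" using sigma_bij bij_betw_imp_surj_on by fastforce
  then have "inv_into (L - {\<rho>}) \<sigma> i \<in> L - {\<rho>}" by (rule inv_into_into)
  moreover have "\<sigma> (inv_into (L - {\<rho>}) \<sigma> i) = i" using \<open>i \<in> _\<close> by (rule f_inv_into_f)
  ultimately show ?thesis unfolding lo_def by blast
qed

lemma l_sigma: "x \<in> L - {\<rho>} \<Longrightarrow> l (\<sigma> x) = x"
  unfolding lo_def using sigma_inj by (simp add: inv_into_f_f)

lemma pfx_subset: "pfx i \<subseteq> L - {\<rho>}"
  unfolding pfx_def by auto

lemma l_in_pfx: "i < n \<Longrightarrow> l i \<in> pfx i"
  using l_in_sigma_l unfolding pfx_def by auto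

lemma lo_image: "i < n \<Longrightarrow> lo \<rho> L \<sigma> ` {0..i} = pfx i"
proof
  assume i: "i < n"
  show "lo \<rho> L \<sigma> ` {0..i} \<subseteq> pfx i"
    using l_in_sigma_l i unfolding pfx_def by fastforce
  show "pfx i \<subseteq> lo \<rho> L \<sigma> ` {0..i}"
  proof
    fix x assume "x \<in> pfx i"
    then have "x \<in> L - {\<rho>}" "\<sigma> x \<le> i" unfolding pfx_def by auto
    then show "x \<in> lo \<rho> L \<sigma> ` {0..i}" using l_sigma by (metis atLeastAtMost_iff image_eqI le0)
  qed
qed

lemma pfx_mono: "i \<le> j \<Longrightarrow> pfx i \<subseteq> pfx j"
  unfolding pfx_def by auto

lemma pfx_subset_Suc: "pfx i \<subseteq> pfx (Suc i)"
  by (simp add: pfx_mono)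

lemma pfx_Suc: "Suc i < n \<Longrightarrow> pfx (Suc i) = insert (l (Suc i)) (pfx i)"
proof
  assume a: "Suc i < n"
  show "pfx (Suc i) \<subseteq> insert (l (Suc i)) (pfx i)"
  proof
    fix x assume "x \<in> pfx (Suc i)"
    then have x: "x \<in> L - {\<rho>}" "\<sigma> x \<le> Suc i" unfolding pfx_def by auto
    show "x \<in> insert (l (Suc i)) (pfx i)"
    proof (cases "\<sigma> x = Suc i")
      case True then show ?thesis using l_sigma x by force
    next
      case False then show ?thesis using x unfolding pfx_def by auto
    qed
  qed
  show "insert (l (Suc i)) (pfx i) \<subseteq> pfx (Suc i)"
    using l_in_pfx[OF a] pfx_mono[of i "Suc i"] by auto
qed

lemma l_notin_pfx: "i < n \<Longrightarrow> j < i \<Longrightarrow> l i \<notin> pfx j"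
  using l_in_sigma_l unfolding pfx_def by auto

lemma pfx_pred: "1 \<le> i \<Longrightarrow> i < n \<Longrightarrow> pfx (i - 1) = pfx i - {l i}"
proof -
  assume i: "1 \<le> i" "i < n"
  then have e: "Suc (i - 1) = i" by simp
  have 1: "pfx i = insert (l i) (pfx (i - 1))" using pfx_Suc[of "i - 1"] e i by simp
  have 2: "l i \<notin> pfx (i - 1)" using l_notin_pfx[of i "i - 1"] i by simp
  show ?thesis using 1 2 by blast
qed

lemma pfx_last: "1 \<le> n \<Longrightarrow> pfx (n - 1) = L - {\<rho>}"
  unfolding pfx_def using sigma_less by fastforce

lemma sigma_pfx: "x \<in> pfx i \<Longrightarrow> \<sigma> x \<le> i"
  unfolding pfx_def by auto

lemma l0_in_pfx: "0 < n \<Longrightarrow> l 0 \<in> pfx i"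
  using l_in_sigma_l unfolding pfx_def by auto

lemma Ts_leaves: "t \<in> Ts \<Longrightarrow> distinct (leaves t) \<and> cl t = L - {\<rho>}"
  using trees unfolding is_tree_def by auto

text \<open>\<open>A\<close> is the lowest vertex of \<open>t\<close> above \<open>l i\<close> and some earlier leaf, \<open>a\<close> its child
  containing \<open>l i\<close>; the restriction of the other child \<open>b\<close> to the earlier leaves is the sibling of
  \<open>l i\<close> in \<open>t\<^sup>i\<close>.\<close>

definition insertion :: "'a btree \<Rightarrow> nat \<Rightarrow> 'a btree \<Rightarrow> 'a btree \<Rightarrow> 'a btree \<Rightarrow> bool" where
  "insertion t i A a b \<longleftrightarrow> A \<in> subtrees t \<and> (A = Node a b \<or> A = Node b a) \<and> l i \<in> cl a \<and>
     cl a \<inter> pfx i = {l i} \<and> cl b \<inter> pfx (i - 1) \<noteq> {} \<and>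
     (\<forall>w\<in>subtrees t. l i \<in> cl w \<and> cl w \<inter> pfx (i - 1) \<noteq> {} \<longrightarrow> A \<in> subtrees w)"

lemma insertion_unique:
  assumes t: "t \<in> Ts" and s1: "insertion t i A a b" and s2: "insertion t i A' a' b'"
  shows "A = A' \<and> a = a' \<and> b = b'"
proof -
  have d: "distinct (leaves t)" using Ts_leaves t by blast
  have A: "A \<in> subtrees t" "A' \<in> subtrees t" using s1 s2 unfolding insertion_def by auto
  have "l i \<in> cl A" "cl A \<inter> pfx (i - 1) \<noteq> {}" using s1 unfolding insertion_def by auto
  then have 1: "A' \<in> subtrees A" using s2 A unfolding insertion_def by blast
  have "l i \<in> cl A'" "cl A' \<inter> pfx (i - 1) \<noteq> {}" using s2 unfolding insertion_def by auto
  then have 2: "A \<in> subtrees A'" using s1 A unfolding insertion_def by blast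
  have "A = A'" using 1 2 subtrees_antisym by blast
  moreover have "distinct (leaves A)" using d A distinct_leaves_subtree by blast
  ultimately show ?thesis using children_unique[of A a b a' b' "l i"] s1 s2 unfolding insertion_def by auto
qed

lemma ola_insertion_exists:
  assumes t: "t \<in> Ts" and i: "1 \<le> i" "i < n"
  shows "\<exists>A a b s. insertion t i A a b \<and> restrict (pfx (i - 1)) b = Some s \<and> ola \<rho> L \<sigma> t i = oidx \<sigma> s"
proof -
  have d: "distinct (leaves t)" and clt: "cl t = L - {\<rho>}" using Ts_leaves t by auto
  have x: "l i \<in> cl t" "l i \<in> pfx i" using l_in_sigma_l l_in_pfx i clt by auto
  have n0: "0 < n" using i by simp
  have a1: "l 0 \<in> cl t" using l_in_sigma_l[OF n0] clt by simp
  have a2: "l 0 \<in> pfx i" using l0_in_pfx[OF n0] by simp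
  have a3: "l 0 \<noteq> l i" using l_in_sigma_l[OF n0] l_in_sigma_l[OF i(2)] i(1) by (metis not_one_le_zero)
  have "l 0 \<in> cl t \<inter> (pfx i - {l i})" using a1 a2 a3 by blast
  then have ne: "cl t \<inter> (pfx i - {l i}) \<noteq> {}" by blast
  obtain A a b where sc: "A \<in> subtrees t" "A = Node a b \<or> A = Node b a" "l i \<in> cl a" "cl a \<inter> pfx i = {l i}"
     "cl b \<inter> pfx i \<noteq> {}" "sibling (l i) (the (restrict (pfx i) t)) = restrict (pfx i) b"
     "\<forall>w\<in>subtrees t. l i \<in> cl w \<and> cl w \<inter> (pfx i - {l i}) \<noteq> {} \<longrightarrow> A \<in> subtrees w"
    using sibling_restrict_lowest[OF d x ne] by blast
  have dA: "distinct (leaves A)" using d sc(1) distinct_leaves_subtree by blast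
  have "l i \<notin> cl b" using dA sc(2,3) by auto
  then have cb: "cl b \<inter> pfx i = cl b \<inter> pfx (i - 1)" using pfx_pred i by auto
  then have rb: "restrict (pfx i) b = restrict (pfx (i - 1)) b" using restrict_cong by blast
  obtain s where s: "restrict (pfx (i - 1)) b = Some s" using sc(5) cb restrict_None by (metis not_Some_eq)
  have "insertion t i A a b" unfolding insertion_def using sc cb pfx_pred[OF i] by auto
  moreover have "ola \<rho> L \<sigma> t i = oidx \<sigma> s"
    unfolding ola_def using sc(6) rb s lo_image[OF i(2)] by simp
  ultimately show ?thesis using s by blast
qed

lemma ola_insertion:
  assumes t: "t \<in> Ts" and i: "1 \<le> i" "i < n" and sp: "insertion t i A a b"
    and s: "restrict (pfx (i - 1)) b = Some s"
  shows "ola \<rho> L \<sigma> t i = oidx \<sigma> s"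
  using ola_insertion_exists[OF t i] insertion_unique[OF t sp] s by force

end

context ordered_trees
begin

text \<open>The cluster of the lowest common ancestor of \<open>X\<close>; \<open>UNIV\<close> if \<open>\<rho> \<in> X\<close>, since then that
  ancestor is the top vertex \<open>\<rho>\<close>.\<close>

definition lca_cl :: "'a btree \<Rightarrow> 'a set \<Rightarrow> 'a set" where
  "lca_cl t X = (if \<rho> \<in> X then UNIV else \<Inter> {cl w | w. w \<in> subtrees t \<and> X \<subseteq> cl w})"

lemma lca_cl_subset: "\<rho> \<notin> X \<Longrightarrow> w \<in> subtrees t \<Longrightarrow> X \<subseteq> cl w \<Longrightarrow> lca_cl t X \<subseteq> cl w"
  unfolding lca_cl_def by auto

lemma lca_cl_eq:
  assumes "\<rho> \<notin> X" "h \<in> subtrees t" "X \<subseteq> cl h" "\<forall>w\<in>subtrees t. X \<subseteq> cl w \<longrightarrow> h \<in> subtrees w"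
  shows "lca_cl t X = cl h"
proof
  show "lca_cl t X \<subseteq> cl h" using lca_cl_subset assms by blast
  show "cl h \<subseteq> lca_cl t X" unfolding lca_cl_def using assms cl_subtree by fastforce
qed

lemma subset_lca_cl: "X \<subseteq> lca_cl t X"
  unfolding lca_cl_def by auto

lemma rho_notin_subtree: "t \<in> Ts \<Longrightarrow> w \<in> subtrees t \<Longrightarrow> \<rho> \<notin> cl w"
  using Ts_leaves cl_subtree by fastforce

lemma cl_subtree_L: "t \<in> Ts \<Longrightarrow> w \<in> subtrees t \<Longrightarrow> cl w \<subseteq> L - {\<rho>}"
  using Ts_leaves cl_subtree by fastforce

lemma lca_in_tree:
  assumes t: "t \<in> Ts" and X: "X \<subseteq> L - {\<rho>}" "X \<noteq> {}"
  shows "\<exists>h\<in>subtrees t. X \<subseteq> cl h \<and> (\<forall>w\<in>subtrees t. X \<subseteq> cl w \<longrightarrow> h \<in> subtrees w) \<and> lca_cl t X = cl h"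
proof -
  have d: "distinct (leaves t)" and c: "cl t = L - {\<rho>}" using Ts_leaves t by auto
  have Xt: "X \<subseteq> cl t" using X c by simp
  from lca_exists[OF d Xt X(2)]
  obtain h where h: "h \<in> subtrees t" "X \<subseteq> cl h" "\<forall>w\<in>subtrees t. X \<subseteq> cl w \<longrightarrow> h \<in> subtrees w"
    by blast
  have "\<rho> \<notin> X" using X by blast
  then show ?thesis using h lca_cl_eq by blast
qed

lemma panc_lvert: "panc (Some a) (lvert \<rho> x) \<longleftrightarrow> x \<noteq> \<rho> \<and> x \<in> cl a"
  unfolding lvert_def using Leaf_in_subtrees_iff[of x a] by auto

lemma span_eq:
  assumes t: "t \<in> Ts" and X: "X \<subseteq> L" "X - {\<rho>} \<noteq> {}"
  shows "span \<rho> t X = (if \<rho> \<in> X then {None} else {}) \<union>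
           Some ` {w \<in> subtrees t. cl w \<inter> X \<noteq> {} \<and> cl w \<subseteq> lca_cl t X}"
proof (cases "\<rho> \<in> X")
  case True
  have anc: "(\<forall>x\<in>X. panc u (lvert \<rho> x)) \<longleftrightarrow> u = None" for u
  proof
    assume "\<forall>x\<in>X. panc u (lvert \<rho> x)"
    then have "panc u (lvert \<rho> \<rho>)" using True by blast
    then show "u = None" unfolding lvert_def by (cases u) auto
  qed simp
  have "span \<rho> t X = {v \<in> pverts t. \<exists>x\<in>X. panc v (lvert \<rho> x)}"
    unfolding span_def using anc by auto
  also have "\<dots> = {None} \<union> Some ` {w \<in> subtrees t. cl w \<inter> X \<noteq> {}}"
  proof -
    have "\<exists>x\<in>X. panc None (lvert \<rho> x)" using True by auto
    moreover have "(\<exists>x\<in>X. panc (Some w) (lvert \<rho> x)) \<longleftrightarrow> cl w \<inter> X \<noteq> {}" if "w \<in> subtrees t" for w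
      using panc_lvert rho_notin_subtree[OF t that] by blast
    ultimately show ?thesis unfolding pverts_def by auto
  qed
  finally show ?thesis using True unfolding lca_cl_def by simp
next
  case False
  have XL: "X \<subseteq> L - {\<rho>}" "X \<noteq> {}" using X False by auto
  obtain h where h: "h \<in> subtrees t" "X \<subseteq> cl h" "\<forall>w\<in>subtrees t. X \<subseteq> cl w \<longrightarrow> h \<in> subtrees w" "lca_cl t X = cl h"
    using lca_in_tree[OF t XL] by blast
  have d: "distinct (leaves t)" using Ts_leaves t by blast
  have ancS: "(\<forall>x\<in>X. panc (Some w) (lvert \<rho> x)) \<longleftrightarrow> X \<subseteq> cl w" for w
    using panc_lvert False by blast
  have none: "None \<notin> span \<rho> t X"
  proof
    assume "None \<in> span \<rho> t X"
    then have "panc (Some h) None" unfolding span_def pverts_def using ancS h(2) h(1) by blast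
    then show False by simp
  qed
  have some: "Some w \<in> span \<rho> t X \<longleftrightarrow> w \<in> subtrees t \<and> cl w \<inter> X \<noteq> {} \<and> cl w \<subseteq> lca_cl t X" for w
  proof
    assume a: "Some w \<in> span \<rho> t X"
    then have w: "w \<in> subtrees t" "\<exists>x\<in>X. panc (Some w) (lvert \<rho> x)"
      "\<forall>u\<in>pverts t. (\<forall>x\<in>X. panc u (lvert \<rho> x)) \<longrightarrow> panc u (Some w)"
      unfolding span_def pverts_def by auto
    have "cl w \<inter> X \<noteq> {}" using w(2) panc_lvert by blast
    moreover have "panc (Some h) (Some w)" using w(3) ancS h(1,2) unfolding pverts_def by blast
    then have "cl w \<subseteq> cl h" using cl_subtree by simp
    ultimately show "w \<in> subtrees t \<and> cl w \<inter> X \<noteq> {} \<and> cl w \<subseteq> lca_cl t X" using w(1) h(4) by simp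
  next
    assume a: "w \<in> subtrees t \<and> cl w \<inter> X \<noteq> {} \<and> cl w \<subseteq> lca_cl t X"
    have 1: "\<exists>x\<in>X. panc (Some w) (lvert \<rho> x)" using a panc_lvert False by blast
    have 2: "panc u (Some w)" if u: "u \<in> pverts t" "\<forall>x\<in>X. panc u (lvert \<rho> x)" for u
    proof (cases u)
      case None then show ?thesis by simp
    next
      case (Some w')
      then have "w' \<in> subtrees t" "X \<subseteq> cl w'" using u ancS unfolding pverts_def by auto
      then have "lca_cl t X \<subseteq> cl w'" using lca_cl_subset False by blast
      then have "cl w \<subseteq> cl w'" using a by blast
      then have "w \<in> subtrees w'" using subtree_if_cl_subset[OF d] a \<open>w' \<in> subtrees t\<close> by blast
      then show ?thesis using Some by simp
    qed
    show "Some w \<in> span \<rho> t X" unfolding span_def pverts_def using a 1 2 unfolding pverts_def by blast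
  qed
  show ?thesis
  proof (rule set_eqI)
    fix v show "v \<in> span \<rho> t X \<longleftrightarrow> v \<in> (if \<rho> \<in> X then {None} else {}) \<union>
           Some ` {w \<in> subtrees t. cl w \<inter> X \<noteq> {} \<and> cl w \<subseteq> lca_cl t X}"
      using none some False by (cases v) auto
  qed
qed

lemma sroot_rho:
  assumes t: "t \<in> Ts" and r: "\<rho> \<in> X"
  shows "sroot \<rho> t X = None"
proof -
  have anc: "(\<forall>x\<in>X. panc u (lvert \<rho> x)) \<longleftrightarrow> u = None" for u
  proof
    assume "\<forall>x\<in>X. panc u (lvert \<rho> x)"
    then have "panc u (lvert \<rho> \<rho>)" using r by blast
    then show "u = None" unfolding lvert_def by (cases u) auto
  qed simp
  show ?thesis unfolding sroot_def
  proof (rule the_equality)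
    show "None \<in> pverts t \<and> (\<forall>x\<in>X. panc None (lvert \<rho> x)) \<and>
      (\<forall>w\<in>pverts t. (\<forall>x\<in>X. panc w (lvert \<rho> x)) \<longrightarrow> panc w None)"
      using anc unfolding pverts_def by auto
  next
    fix v assume "v \<in> pverts t \<and> (\<forall>x\<in>X. panc v (lvert \<rho> x)) \<and>
      (\<forall>w\<in>pverts t. (\<forall>x\<in>X. panc w (lvert \<rho> x)) \<longrightarrow> panc w v)"
    then show "v = None" using anc by blast
  qed
qed

lemma sroot_lca:
  assumes t: "t \<in> Ts" and X: "X \<subseteq> L" "X \<noteq> {}" and r: "\<rho> \<notin> X"
  shows "\<exists>h. sroot \<rho> t X = Some h \<and> h \<in> subtrees t \<and> cl h = lca_cl t X \<and> X \<subseteq> cl h"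
proof -
  have XL: "X \<subseteq> L - {\<rho>}" "X \<noteq> {}" using X r by auto
  obtain h where h: "h \<in> subtrees t" "X \<subseteq> cl h" "\<forall>w\<in>subtrees t. X \<subseteq> cl w \<longrightarrow> h \<in> subtrees w" "lca_cl t X = cl h"
    using lca_in_tree[OF t XL] by blast
  have ancS: "(\<forall>x\<in>X. panc (Some w) (lvert \<rho> x)) \<longleftrightarrow> X \<subseteq> cl w" for w
    using panc_lvert r by blast
  have "sroot \<rho> t X = Some h" unfolding sroot_def
  proof (rule the_equality)
    show "Some h \<in> pverts t \<and> (\<forall>x\<in>X. panc (Some h) (lvert \<rho> x)) \<and>
      (\<forall>w\<in>pverts t. (\<forall>x\<in>X. panc w (lvert \<rho> x)) \<longrightarrow> panc w (Some h))"
    proof (intro conjI)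
      show "Some h \<in> pverts t" using h(1) unfolding pverts_def by simp
      show "\<forall>x\<in>X. panc (Some h) (lvert \<rho> x)" using ancS h(2) by blast
    next
      show "\<forall>w\<in>pverts t. (\<forall>x\<in>X. panc w (lvert \<rho> x)) \<longrightarrow> panc w (Some h)"
      proof (intro ballI impI)
      fix w assume w: "w \<in> pverts t" "\<forall>x\<in>X. panc w (lvert \<rho> x)"
      show "panc w (Some h)"
      proof (cases w)
        case None then show ?thesis by simp
      next
        case (Some w')
        then show ?thesis using w ancS h(3) unfolding pverts_def by auto
      qed
      qed
    qed
  next
    fix v assume v: "v \<in> pverts t \<and> (\<forall>x\<in>X. panc v (lvert \<rho> x)) \<and>
      (\<forall>w\<in>pverts t. (\<forall>x\<in>X. panc w (lvert \<rho> x)) \<longrightarrow> panc w v)"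
    have "Some h \<in> pverts t" using h(1) unfolding pverts_def by simp
    then have "panc (Some h) v" using v ancS h(2) by blast
    then obtain w' where w': "v = Some w'" "w' \<in> subtrees h" by (cases v) auto
    then have "w' \<in> subtrees t" using h(1) subtrees_trans by blast
    moreover have "X \<subseteq> cl w'" using v w'(1) ancS by blast
    ultimately have "h \<in> subtrees w'" using h(3) by blast
    then show "v = Some h" using w' subtrees_antisym by blast
  qed
  then show ?thesis using h by auto
qed

end

context ordered_trees
begin

lemma insertion_subtrees: "insertion t i A a b \<Longrightarrow> b \<in> subtrees t \<and> a \<in> subtrees t \<and> A \<in> subtrees t"
proof -
  assume sp: "insertion t i A a b"
  then have A: "A \<in> subtrees t" "A = Node a b \<or> A = Node b a" unfolding insertion_def by auto
  then have "a \<in> subtrees A" "b \<in> subtrees A" by auto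
  then show ?thesis using A(1) subtrees_trans by blast
qed

lemma insertion_sibling_props:
  assumes t: "t \<in> Ts" and sp: "insertion t i A a b" and s: "restrict (pfx (i - 1)) b = Some s"
  shows "distinct (leaves s) \<and> inj_on \<sigma> (cl s) \<and> cl s = cl b \<inter> pfx (i - 1)"
proof -
  have "b \<in> subtrees t" using insertion_subtrees sp by blast
  then have db: "distinct (leaves b)" using Ts_leaves t distinct_leaves_subtree by blast
  have c: "cl s = cl b \<inter> pfx (i - 1)" using restrict_cl s by blast
  have "cl s \<subseteq> L - {\<rho>}" using c pfx_subset by blast
  then have "inj_on \<sigma> (cl s)" using sigma_inj inj_on_subset by blast
  then show ?thesis using restrict_distinct[OF s db] c by blast
qed

lemma oidx_label_in_sibling:
  assumes t: "t \<in> Ts" and i: "1 \<le> i" "i < n" and sp: "insertion t i A a b"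
    and s: "restrict (pfx (i - 1)) b = Some s"
  shows "l (nat \<bar>oidx \<sigma> s\<bar>) \<in> cl b \<inter> pfx (i - 1) \<and> nat \<bar>oidx \<sigma> s\<bar> < i"
proof -
  have f: "distinct (leaves s)" "inj_on \<sigma> (cl s)" "cl s = cl b \<inter> pfx (i - 1)"
    using insertion_sibling_props[OF t sp s] by auto
  obtain y where y: "y \<in> cl s" "int (\<sigma> y) = \<bar>oidx \<sigma> s\<bar>" using oidx_abs_label[OF f(2,1)] by blast
  have e: "nat \<bar>oidx \<sigma> s\<bar> = \<sigma> y" using y(2) by simp
  have yS: "y \<in> pfx (i - 1)" using y(1) f(3) by blast
  then have "y \<in> L - {\<rho>}" using pfx_subset by blast
  then have "l (\<sigma> y) = y" using l_sigma by blast
  moreover have "\<sigma> y < i" using sigma_pfx[OF yS] i by simp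
  ultimately show ?thesis using e y(1) f(3) by simp
qed

lemma insertion_sibling_leaf:
  assumes t: "t \<in> Ts" and i: "1 \<le> i" "i < n" and sp: "insertion t i A a b"
    and s: "restrict (pfx (i - 1)) b = Some s" and c: "oidx \<sigma> s \<ge> 0"
  shows "cl b \<inter> pfx (i - 1) = {l (nat (oidx \<sigma> s))}"
proof -
  have f: "distinct (leaves s)" "inj_on \<sigma> (cl s)" "cl s = cl b \<inter> pfx (i - 1)"
    using insertion_sibling_props[OF t sp s] by auto
  obtain y where sy: "s = Leaf y"
  proof (cases s)
    case (Node u1 u2)
    then show ?thesis using oidx_NodeE[of u1 u2 \<sigma>] f c by auto
  qed
  then have "y \<in> pfx (i - 1)" using f(3) by auto
  then have "y \<in> L - {\<rho>}" using pfx_subset by blast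
  then have "l (\<sigma> y) = y" using l_sigma by blast
  then show ?thesis using f(3) sy by simp
qed

lemma insertionI:
  assumes t: "t \<in> Ts" and q: "1 \<le> q" "q < n"
    and w: "w \<in> subtrees t" "w = Node wa wb \<or> w = Node wb wa"
    and a: "l q \<in> cl wa" "cl wa \<inter> pfx (q - 1) = {}" and b: "cl wb \<inter> pfx (q - 1) \<noteq> {}"
  shows "insertion t q w wa wb"
  unfolding insertion_def
proof (intro conjI ballI impI)
  show "w \<in> subtrees t" "w = Node wa wb \<or> w = Node wb wa" "l q \<in> cl wa" "cl wb \<inter> pfx (q - 1) \<noteq> {}"
    using w a b by simp_all
  show "cl wa \<inter> pfx q = {l q}" using a pfx_pred[OF q] l_in_pfx[OF q(2)] by blast
  fix w' assume w': "w' \<in> subtrees t" "l q \<in> cl w' \<and> cl w' \<inter> pfx (q - 1) \<noteq> {}"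
  have d: "distinct (leaves t)" using Ts_leaves[OF t] by blast
  have "cl wa \<inter> cl wb = {}" using distinct_leaves_subtree[OF d w(1)] w(2) by auto
  then have "w' \<notin> subtrees wa" "w' \<notin> subtrees wb" using a w'(2) cl_subtree by blast+
  moreover have "cl w \<inter> cl w' \<noteq> {}" using w(2) a(1) w'(2) by auto
  then have "w \<in> subtrees w' \<or> w' \<in> subtrees w" using subtrees_laminar[OF d w(1) w'(1)] by blast
  ultimately show "w \<in> subtrees w'" using w(2) by auto
qed

text \<open>An internal sibling of index \<open>-q\<close> is the insertion vertex of \<open>l q\<close>: its child of larger
  minimum contains \<open>l q\<close> and no earlier leaf.\<close>

lemma insertion_sibling_Node:
  assumes t: "t \<in> Ts" and i: "1 \<le> i" "i < n" and sp: "insertion t i A a b"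
    and s: "restrict (pfx (i - 1)) b = Some s" and c: "oidx \<sigma> s < 0"
  shows "1 \<le> nat (- oidx \<sigma> s) \<and> nat (- oidx \<sigma> s) < i \<and>
    (\<exists>w wa wb. w \<in> subtrees b \<and> (w = Node wa wb \<or> w = Node wb wa) \<and> cl b \<inter> pfx (i - 1) \<subseteq> cl w \<and>
      l (nat (- oidx \<sigma> s)) \<in> cl wa \<and> (\<forall>y\<in>cl wa \<inter> pfx (i - 1). nat (- oidx \<sigma> s) \<le> \<sigma> y) \<and>
      insertion t (nat (- oidx \<sigma> s)) w wa wb)"
proof -
  define q where "q = nat (- oidx \<sigma> s)"
  have f: "distinct (leaves s)" "inj_on \<sigma> (cl s)"
    using insertion_sibling_props[OF t sp s] by auto
  obtain u1 u2 where su: "s = Node u1 u2" using c by (cases s) auto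
  obtain wa0 wb0 where w0: "Node wa0 wb0 \<in> subtrees b" "restrict (pfx (i - 1)) wa0 = Some u1"
    "restrict (pfx (i - 1)) wb0 = Some u2" "cl b \<inter> pfx (i - 1) \<subseteq> cl (Node wa0 wb0)"
    using restrict_eq_NodeD[OF s[unfolded su]] by blast
  have w0t: "Node wa0 wb0 \<in> subtrees t" using w0(1) insertion_subtrees[OF sp] subtrees_trans by blast
  have main: "1 \<le> q \<and> q < i \<and> l q \<in> cl wa \<and> (\<forall>y\<in>cl wa \<inter> pfx (i - 1). q \<le> \<sigma> y) \<and>
      insertion t q (Node wa0 wb0) wa wb"
    if sw: "Node wa0 wb0 = Node wa wb \<or> Node wa0 wb0 = Node wb wa" and r: "restrict (pfx (i - 1)) wa = Some ua"
      "restrict (pfx (i - 1)) wb = Some ub" and lt: "mu \<sigma> ub < mu \<sigma> ua" and qa: "q = mu \<sigma> ua" for wa wb ua ub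
  proof -
    have cl_u: "cl ua = cl wa \<inter> pfx (i - 1)" "cl ub = cl wb \<inter> pfx (i - 1)" using restrict_cl r by blast+
    obtain ya where ya: "ya \<in> cl ua" "\<sigma> ya = q" using mu_in[of \<sigma> ua] qa by (metis imageE)
    obtain yb where yb: "yb \<in> cl ub" "\<sigma> yb < q" using mu_in[of \<sigma> ub] lt qa by (metis imageE)
    have ya_in: "ya \<in> pfx (i - 1)" "ya \<in> cl wa" using ya(1) cl_u(1) by auto
    then have "l q = ya" using l_sigma[of ya] pfx_subset ya(2) by blast
    have "q < i" using sigma_pfx[OF ya_in(1)] ya(2) i(1) by simp
    have "1 \<le> q" using lt qa by simp
    have ge: "\<forall>y\<in>cl wa \<inter> pfx (i - 1). q \<le> \<sigma> y"
    proof
      fix y assume "y \<in> cl wa \<inter> pfx (i - 1)"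
      then show "q \<le> \<sigma> y" using mu_le[of y ua \<sigma>] cl_u(1) qa by simp
    qed
    have "cl wa \<inter> pfx (q - 1) = {}"
    proof -
      have "False" if y: "y \<in> cl wa" "y \<in> pfx (q - 1)" for y
      proof -
        have "q - 1 \<le> i - 1" using \<open>q < i\<close> by simp
        then have "y \<in> pfx (i - 1)" using y(2) pfx_mono by blast
        then have "q \<le> \<sigma> y" using ge y(1) by blast
        then show False using sigma_pfx[OF y(2)] \<open>1 \<le> q\<close> by simp
      qed
      then show ?thesis by blast
    qed
    moreover have "yb \<in> pfx (q - 1)" using yb cl_u(2) unfolding pfx_def by auto
    then have "cl wb \<inter> pfx (q - 1) \<noteq> {}" using yb(1) cl_u(2) by blast
    ultimately have "insertion t q (Node wa0 wb0) wa wb"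
      using insertionI[OF t \<open>1 \<le> q\<close> _ w0t sw] \<open>l q = ya\<close> ya_in(2) \<open>q < i\<close> i(2) by simp
    then show ?thesis using \<open>1 \<le> q\<close> \<open>q < i\<close> \<open>l q = ya\<close> ya_in(2) ge by blast
  qed
  obtain y1 y2 where y: "y1 \<in> cl u1" "\<sigma> y1 = mu \<sigma> u1" "y2 \<in> cl u2" "\<sigma> y2 = mu \<sigma> u2"
    using mu_in[of \<sigma> u1] mu_in[of \<sigma> u2] by (metis imageE)
  then have "y1 \<noteq> y2" using f(1) su by auto
  then have "\<sigma> y1 \<noteq> \<sigma> y2" by (rule inj_on_contraD[OF f(2)[unfolded su]]) (use y in auto)
  moreover have q: "q = max (mu \<sigma> u1) (mu \<sigma> u2)" unfolding q_def using su by simp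
  ultimately consider "mu \<sigma> u2 < mu \<sigma> u1" "q = mu \<sigma> u1" | "mu \<sigma> u1 < mu \<sigma> u2" "q = mu \<sigma> u2"
    using y by linarith
  then have "1 \<le> q \<and> q < i \<and> (\<exists>wa wb. (Node wa0 wb0 = Node wa wb \<or> Node wa0 wb0 = Node wb wa) \<and>
      l q \<in> cl wa \<and> (\<forall>y\<in>cl wa \<inter> pfx (i - 1). q \<le> \<sigma> y) \<and> insertion t q (Node wa0 wb0) wa wb)"
  proof cases
    case 1
    then show ?thesis using main[of wa0 wb0 u1 u2] w0(2,3) by blast
  next
    case 2
    then show ?thesis using main[of wb0 wa0 u2 u1] w0(2,3) by blast
  qed
  then show ?thesis using w0(1,4) unfolding q_def by blast
qed

end

section \<open>From a leaf ordering to an acyclic agreement forest\<close>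

declare mismatch_upto.simps(2)[simp del]

lemma mismatch_upto_Suc_subset:
  "mismatch_upto \<rho> L Ts \<sigma> (Suc i) \<subseteq> insert (Suc i) (mismatch_upto \<rho> L Ts \<sigma> i)"
  by (simp only: mismatch_upto.simps split: if_split) blast

lemma mismatch_upto_subset: "mismatch_upto \<rho> L Ts \<sigma> i \<subseteq> {1..i}"
proof (induction i)
  case (Suc i)
  then show ?case using mismatch_upto_Suc_subset[of \<rho> L Ts \<sigma> i] by fastforce
qed simp

lemma mismatch_upto_mono: "i \<le> j \<Longrightarrow> mismatch_upto \<rho> L Ts \<sigma> i \<subseteq> mismatch_upto \<rho> L Ts \<sigma> j"
  by (rule lift_Suc_mono_le[of "mismatch_upto \<rho> L Ts \<sigma>"]) (simp only: mismatch_upto.simps split: if_split, blast)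

locale ordered_trees_ref = ordered_trees +
  fixes t0 assumes t0: "t0 \<in> Ts"
begin

abbreviation mism :: "nat \<Rightarrow> nat set" where "mism i \<equiv> mismatch_upto \<rho> L Ts \<sigma> i"

abbreviation ol :: "'a btree \<Rightarrow> nat \<Rightarrow> int" where "ol t i \<equiv> ola \<rho> L \<sigma> t i"

text \<open>The leaf \<open>l (partner j)\<close> lies in the sibling of \<open>l j\<close> in \<open>t0\<^sup>j\<close>: it is the sibling itself when
  \<open>OLA\<^sub>j \<ge> 0\<close>, and the leaf realising the index \<open>OLA\<^sub>j\<close> of the sibling otherwise.\<close>

definition partner :: "nat \<Rightarrow> nat" where "partner j = nat \<bar>ol t0 j\<bar>"

definition new_mismatch :: "nat \<Rightarrow> bool" where
  "new_mismatch i \<longleftrightarrow> (\<exists>t\<in>Ts. \<exists>t'\<in>Ts. ol t (Suc i) \<noteq> ol t' (Suc i)) \<or>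
     (\<exists>j\<in>mism i. \<forall>t\<in>Ts. ol t (Suc i) = - int j)"

lemma mism_Suc: "mism (Suc i) = (if new_mismatch i then insert (Suc i) (mism i) else mism i)"
  by (simp only: mismatch_upto.simps new_mismatch_def)

lemma Suc_in_mism_iff: "Suc i \<in> mism (Suc i) \<longleftrightarrow> new_mismatch i"
proof -
  have "Suc i \<notin> mism i" using mismatch_upto_subset[of \<rho> L Ts \<sigma> i] by auto
  then show ?thesis by (simp add: mism_Suc)
qed

lemma mism_Suc_notin:
  assumes "Suc i \<notin> mism (Suc i)"
  shows "mism (Suc i) = mism i" "\<forall>t\<in>Ts. \<forall>t'\<in>Ts. ol t (Suc i) = ol t' (Suc i)"
    "\<forall>j\<in>mism i. \<not> (\<forall>t\<in>Ts. ol t (Suc i) = - int j)"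
proof -
  have "\<not> new_mismatch i" using assms Suc_in_mism_iff by blast
  then show "mism (Suc i) = mism i" by (simp add: mism_Suc)
  show "\<forall>t\<in>Ts. \<forall>t'\<in>Ts. ol t (Suc i) = ol t' (Suc i)" "\<forall>j\<in>mism i. \<not> (\<forall>t\<in>Ts. ol t (Suc i) = - int j)"
    using \<open>\<not> new_mismatch i\<close> unfolding new_mismatch_def by blast+
qed

lemma mism_Suc_in:
  assumes "Suc i \<in> mism (Suc i)"
  shows "mism (Suc i) = insert (Suc i) (mism i)" "Suc i \<notin> mism i"
  using assms Suc_in_mism_iff[of i] mism_Suc[of i] mismatch_upto_subset[of \<rho> L Ts \<sigma> i] by auto

lemma ola_agree_notin_mism:
  assumes "1 \<le> j" "j \<le> i" "j \<notin> mism i" "t \<in> Ts"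
  shows "ol t j = ol t0 j"
proof -
  obtain j' where j': "j = Suc j'" using assms(1) by (cases j) auto
  have "j \<notin> mism j" using mismatch_upto_mono[OF assms(2), of \<rho> L Ts \<sigma>] assms(3) by blast
  then show ?thesis using mism_Suc_notin[of j'] j' assms(4) t0 by blast
qed

lemma n_pos: "0 < n"
proof -
  have "cl t0 = L - {\<rho>}" using Ts_leaves t0 by blast
  then have "L - {\<rho>} \<noteq> {}" using cl_ne by metis
  then show ?thesis unfolding n_def using finL by (simp add: card_gt_0_iff)
qed

lemma pfx_0: "pfx 0 = {l 0}"
proof -
  have "l 0 \<in> pfx 0" using l_in_pfx n_pos by blast
  moreover have "x \<in> pfx 0 \<Longrightarrow> x = l 0" for x
    using l_sigma sigma_pfx pfx_subset by (metis le_zero_eq subsetD)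
  ultimately show ?thesis by blast
qed

text \<open>The separation clause says that \<open>t(X)\<close> and \<open>t(Y)\<close> share no vertex as far as the
  leaves seen so far can tell; the last clause makes the least label of a block the least leaf
  below its root, which orders the inheritance graph.\<close>

definition block_inv :: "nat \<Rightarrow> 'a set set \<Rightarrow> bool" where
  "block_inv i P \<longleftrightarrow> finite P \<and> (\<forall>X\<in>P. X \<noteq> {}) \<and> (\<forall>X\<in>P. \<forall>Y\<in>P. X \<noteq> Y \<longrightarrow> X \<inter> Y = {}) \<and>
     \<Union>P = insert \<rho> (pfx i) \<and> card P = card (mism i) + 1 \<and> (\<exists>X\<in>P. \<rho> \<in> X \<and> l 0 \<in> X) \<and>
     (\<forall>j. 1 \<le> j \<and> j \<le> i \<and> j \<notin> mism i \<longrightarrow> (\<exists>X\<in>P. l j \<in> X \<and> l (partner j) \<in> X)) \<and>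
     (\<forall>X\<in>P. \<forall>t1\<in>Ts. \<forall>t2\<in>Ts. rel_option biso (restrict X t1) (restrict X t2)) \<and>
     (\<forall>X\<in>P. \<forall>Y\<in>P. X \<noteq> Y \<longrightarrow> (\<forall>t\<in>Ts. \<forall>w\<in>subtrees t.
        \<not> (cl w \<inter> X \<noteq> {} \<and> cl w \<inter> Y \<noteq> {} \<and> cl w \<inter> pfx i \<subseteq> lca_cl t X \<inter> lca_cl t Y))) \<and>
     (\<forall>X\<in>P. \<rho> \<notin> X \<longrightarrow> (\<forall>t\<in>Ts. \<forall>y\<in>lca_cl t X \<inter> pfx i. Min (\<sigma> ` X) \<le> \<sigma> y))"

lemma
  assumes "block_inv i P"
  shows block_inv_finite: "finite P"
    and block_inv_nonempty: "\<forall>X\<in>P. X \<noteq> {}"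
    and block_inv_disjoint: "\<forall>X\<in>P. \<forall>Y\<in>P. X \<noteq> Y \<longrightarrow> X \<inter> Y = {}"
    and block_inv_Union: "\<Union>P = insert \<rho> (pfx i)"
    and block_inv_card: "card P = card (mism i) + 1"
    and block_inv_root: "\<exists>X\<in>P. \<rho> \<in> X \<and> l 0 \<in> X"
    and block_inv_partner: "\<forall>j. 1 \<le> j \<and> j \<le> i \<and> j \<notin> mism i \<longrightarrow> (\<exists>X\<in>P. l j \<in> X \<and> l (partner j) \<in> X)"
    and block_inv_iso: "\<forall>X\<in>P. \<forall>t1\<in>Ts. \<forall>t2\<in>Ts. rel_option biso (restrict X t1) (restrict X t2)"
    and block_inv_separated: "\<forall>X\<in>P. \<forall>Y\<in>P. X \<noteq> Y \<longrightarrow> (\<forall>t\<in>Ts. \<forall>w\<in>subtrees t.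
        \<not> (cl w \<inter> X \<noteq> {} \<and> cl w \<inter> Y \<noteq> {} \<and> cl w \<inter> pfx i \<subseteq> lca_cl t X \<inter> lca_cl t Y))"
    and block_inv_min: "\<forall>X\<in>P. \<rho> \<notin> X \<longrightarrow> (\<forall>t\<in>Ts. \<forall>y\<in>lca_cl t X \<inter> pfx i. Min (\<sigma> ` X) \<le> \<sigma> y)"
  using assms unfolding block_inv_def by simp_all

lemma block_invI:
  assumes "finite P" "\<forall>X\<in>P. X \<noteq> {}" "\<forall>X\<in>P. \<forall>Y\<in>P. X \<noteq> Y \<longrightarrow> X \<inter> Y = {}"
     "\<Union>P = insert \<rho> (pfx i)" "card P = card (mism i) + 1" "\<exists>X\<in>P. \<rho> \<in> X \<and> l 0 \<in> X"
     "\<forall>j. 1 \<le> j \<and> j \<le> i \<and> j \<notin> mism i \<longrightarrow> (\<exists>X\<in>P. l j \<in> X \<and> l (partner j) \<in> X)"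
     "\<forall>X\<in>P. \<forall>t1\<in>Ts. \<forall>t2\<in>Ts. rel_option biso (restrict X t1) (restrict X t2)"
     "\<forall>X\<in>P. \<forall>Y\<in>P. X \<noteq> Y \<longrightarrow> (\<forall>t\<in>Ts. \<forall>w\<in>subtrees t.
        \<not> (cl w \<inter> X \<noteq> {} \<and> cl w \<inter> Y \<noteq> {} \<and> cl w \<inter> pfx i \<subseteq> lca_cl t X \<inter> lca_cl t Y))"
     "\<forall>X\<in>P. \<rho> \<notin> X \<longrightarrow> (\<forall>t\<in>Ts. \<forall>y\<in>lca_cl t X \<inter> pfx i. Min (\<sigma> ` X) \<le> \<sigma> y)"
  shows "block_inv i P"
  unfolding block_inv_def using assms by simp

lemma block_inv_subset: "block_inv i P \<Longrightarrow> X \<in> P \<Longrightarrow> X \<subseteq> insert \<rho> (pfx i)"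
  using block_inv_Union[of i P] by blast

lemma block_inv_unique: "block_inv i P \<Longrightarrow> X \<in> P \<Longrightarrow> Y \<in> P \<Longrightarrow> y \<in> X \<Longrightarrow> y \<in> Y \<Longrightarrow> X = Y"
  using block_inv_disjoint[of i P] by blast

lemma block_inv_0: "block_inv 0 {{\<rho>, l 0}}"
proof -
  have "restrict {\<rho>, l 0} t = Some (Leaf (l 0))" if "t \<in> Ts" for t
  proof -
    have "cl t = L - {\<rho>}" "distinct (leaves t)" using Ts_leaves that by auto
    moreover have "l 0 \<in> L - {\<rho>}" using l_in_sigma_l n_pos by blast
    ultimately show ?thesis using restrict_single[of t "{\<rho>, l 0}" "l 0"] by blast
  qed
  then show ?thesis unfolding block_inv_def using pfx_0 by auto
qed

lemma insertion_exists:
  assumes "t \<in> Ts" "Suc i < n"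
  shows "\<exists>A a b s. insertion t (Suc i) A a b \<and> restrict (pfx i) b = Some s \<and> ol t (Suc i) = oidx \<sigma> s"
  using ola_insertion_exists[OF assms(1) _ assms(2)] by simp

lemma lca_clI: "\<rho> \<notin> X \<Longrightarrow> (\<And>w. w \<in> subtrees t \<Longrightarrow> X \<subseteq> cl w \<Longrightarrow> y \<in> cl w) \<Longrightarrow> y \<in> lca_cl t X"
  unfolding lca_cl_def by auto

lemma lca_cl_singleton:
  assumes "t \<in> Ts" "x \<in> L - {\<rho>}"
  shows "lca_cl t {x} = {x}"
proof -
  have "x \<in> cl t" using assms Ts_leaves[OF assms(1)] by simp
  then have "Leaf x \<in> subtrees t" using Leaf_in_subtrees_iff[of x t] by blast
  then have "lca_cl t {x} \<subseteq> {x}" using lca_cl_subset[of "{x}" "Leaf x" t] assms(2) by auto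
  then show ?thesis using subset_lca_cl[of "{x}" t] by blast
qed

lemma partner_in_insertion_sibling:
  assumes k: "Suc i < n" and nm: "Suc i \<notin> mism (Suc i)" and t: "t \<in> Ts"
    and sp: "insertion t (Suc i) A a b" and s: "restrict (pfx i) b = Some s"
  shows "partner (Suc i) = nat \<bar>oidx \<sigma> s\<bar>" "ol t0 (Suc i) = oidx \<sigma> s"
    "l (partner (Suc i)) \<in> cl b \<inter> pfx i" "partner (Suc i) < Suc i"
proof -
  have "ol t (Suc i) = ol t0 (Suc i)" using ola_agree_notin_mism[OF _ le_refl nm t] by simp
  moreover have "ol t (Suc i) = oidx \<sigma> s" using ola_insertion[OF t _ k sp] s by simp
  ultimately show "partner (Suc i) = nat \<bar>oidx \<sigma> s\<bar>" "ol t0 (Suc i) = oidx \<sigma> s"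
    unfolding partner_def by simp_all
  then show "l (partner (Suc i)) \<in> cl b \<inter> pfx i" "partner (Suc i) < Suc i"
    using oidx_label_in_sibling[OF t _ k sp] s by simp_all
qed

text \<open>Any vertex with a leaf of an earlier block below it that also contains \<open>l (Suc i)\<close> contains
  the insertion vertex of \<open>l (Suc i)\<close>, hence its sibling.\<close>

lemma partner_in_cl_if_meets_block:
  assumes inv: "block_inv i P" and k: "Suc i < n" and nm: "Suc i \<notin> mism (Suc i)"
    and t: "t \<in> Ts" and w: "w \<in> subtrees t" and x: "l (Suc i) \<in> cl w"
    and Y: "Y \<in> P" "cl w \<inter> Y \<noteq> {}"
  shows "l (partner (Suc i)) \<in> cl w"
proof -
  obtain A a b s where sp: "insertion t (Suc i) A a b" "restrict (pfx i) b = Some s"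
    using insertion_exists[OF t k] by blast
  have "Y \<subseteq> insert \<rho> (pfx i)" "\<rho> \<notin> cl w"
    using block_inv_subset[OF inv Y(1)] rho_notin_subtree[OF t w] by auto
  then have "cl w \<inter> pfx i \<noteq> {}" using Y(2) by auto
  then have "A \<in> subtrees w" using sp(1) w x unfolding insertion_def by auto
  moreover have "b \<in> subtrees A" using sp(1) unfolding insertion_def by auto
  ultimately have "cl b \<subseteq> cl w" using cl_subtree subtrees_trans by blast
  then show ?thesis using partner_in_insertion_sibling[OF k nm t sp] by blast
qed

context
  fixes i P X0
  assumes inv: "block_inv i P" and k: "Suc i < n" and nm: "Suc i \<notin> mism (Suc i)"
    and X0: "X0 \<in> P" "l (partner (Suc i)) \<in> X0"
begin

text \<open>If the sibling of \<open>l (Suc i)\<close> in \<open>t\<^sup>i\<close> is an internal vertex of index \<open>-q\<close>, then \<open>q\<close> is no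
  mismatch, so \<open>l q\<close> and \<open>l (partner q)\<close> lie in the block \<open>X0\<close> and on different sides of the
  insertion vertex of \<open>l q\<close>.\<close>

lemma partner_block_cherry:
  assumes t: "t \<in> Ts" and sp: "insertion t (Suc i) A a b" and s: "restrict (pfx i) b = Some s"
    and neg: "oidx \<sigma> s < 0"
  obtains w wa wb where "w \<in> subtrees b" "w = Node wa wb \<or> w = Node wb wa" "cl b \<inter> pfx i \<subseteq> cl w"
    "l (nat (- oidx \<sigma> s)) \<in> cl wa \<inter> X0" "\<forall>y\<in>cl wa \<inter> pfx i. nat (- oidx \<sigma> s) \<le> \<sigma> y"
    "l (partner (nat (- oidx \<sigma> s))) \<in> cl wb \<inter> X0" "\<sigma> (l (partner (nat (- oidx \<sigma> s)))) < nat (- oidx \<sigma> s)"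
proof -
  define q where "q = nat (- oidx \<sigma> s)"
  obtain w wa wb where W: "1 \<le> q" "q < Suc i" "w \<in> subtrees b" "w = Node wa wb \<or> w = Node wb wa"
      "cl b \<inter> pfx i \<subseteq> cl w" "l q \<in> cl wa" "\<forall>y\<in>cl wa \<inter> pfx i. q \<le> \<sigma> y" "insertion t q w wa wb"
    using insertion_sibling_Node[OF t _ k sp _ neg] s unfolding q_def by auto
  have pq: "partner (Suc i) = q" and ola: "ol t0 (Suc i) = - int q"
    using partner_in_insertion_sibling[OF k nm t sp s] neg unfolding q_def by simp_all
  have "q \<notin> mism i"
    using mism_Suc_notin[OF nm] ola_agree_notin_mism[OF _ le_refl nm] ola by fastforce
  then obtain X where X: "X \<in> P" "l q \<in> X" "l (partner q) \<in> X"
    using block_inv_partner[OF inv] W(1,2) by fastforce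
  have "X = X0" using block_inv_unique[OF inv X(1) X0(1) X(2)] X0(2) pq by simp
  have qn: "q < n" using W(2) k by simp
  obtain sq where sq: "restrict (pfx (q - 1)) wb = Some sq"
    using W(8) restrict_None unfolding insertion_def by (metis not_Some_eq)
  have "ol t q = ol t0 q" using ola_agree_notin_mism[OF W(1) _ \<open>q \<notin> mism i\<close> t] W(2) by simp
  then have "l (partner q) \<in> cl wb \<inter> pfx (q - 1)"
    using oidx_label_in_sibling[OF t W(1) qn W(8) sq] ola_insertion[OF t W(1) qn W(8) sq]
    unfolding partner_def by simp
  then have "l (partner q) \<in> cl wb \<inter> X0" "\<sigma> (l (partner q)) < q"
    using X \<open>X = X0\<close> sigma_pfx[of "l (partner q)" "q - 1"] W(1) by auto
  then show ?thesis using that W(3-7) X(2) \<open>X = X0\<close> unfolding q_def by blast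
qed

lemma partner_block_covers_sibling:
  assumes t: "t \<in> Ts" and sp: "insertion t (Suc i) A a b" and s: "restrict (pfx i) b = Some s"
    and w': "w' \<in> subtrees t" "X0 - {\<rho>} \<subseteq> cl w'"
  shows "cl b \<inter> pfx i \<subseteq> cl w'"
proof (cases "oidx \<sigma> s \<ge> 0")
  case True
  have "l (partner (Suc i)) \<in> cl w'"
    using X0(2) w'(2) partner_in_insertion_sibling(3)[OF k nm t sp s] pfx_subset by blast
  then show ?thesis
    using insertion_sibling_leaf[OF t _ k sp] s partner_in_insertion_sibling(1)[OF k nm t sp s] True by auto
next
  case False
  then obtain w wa wb where W: "w \<in> subtrees b" "w = Node wa wb \<or> w = Node wb wa" "cl b \<inter> pfx i \<subseteq> cl w"
    "l (nat (- oidx \<sigma> s)) \<in> cl wa \<inter> X0" "l (partner (nat (- oidx \<sigma> s))) \<in> cl wb \<inter> X0"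
    using partner_block_cherry[OF t sp s] by (metis not_le)
  have "b \<in> subtrees t" using insertion_subtrees sp by blast
  then have wt: "w \<in> subtrees t" using W(1) subtrees_trans by blast
  then have "wa \<in> subtrees t" "wb \<in> subtrees t" using W(2) subtrees_trans[of _ w t] by auto
  then have "l (nat (- oidx \<sigma> s)) \<in> cl w'" "l (partner (nat (- oidx \<sigma> s))) \<in> cl w'"
    using W(4,5) w'(2) cl_subtree_L[OF t] by blast+
  then have "w \<in> subtrees w'"
    using Node_in_subtrees_if_cl_meets_children[OF _ wt W(2) w'(1)] W(4,5) Ts_leaves[OF t] by blast
  then show ?thesis using W(3) cl_subtree by blast
qed

lemma restrict_partner_block_sibling:
  assumes t: "t \<in> Ts" and sp: "insertion t (Suc i) A a b" and s: "restrict (pfx i) b = Some s"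
  shows "\<exists>z. restrict X0 b = Some z \<and> oidx \<sigma> z = ol t0 (Suc i)"
proof -
  have bt: "b \<in> subtrees t" using insertion_subtrees sp by blast
  have db: "distinct (leaves b)" using bt Ts_leaves t distinct_leaves_subtree by blast
  have X0b: "cl b \<inter> X0 \<subseteq> cl b \<inter> pfx i"
    using block_inv_subset[OF inv X0(1)] rho_notin_subtree[OF t bt] by blast
  have ola: "ol t0 (Suc i) = oidx \<sigma> s" "l (partner (Suc i)) \<in> cl b \<inter> pfx i"
    using partner_in_insertion_sibling[OF k nm t sp s] by simp_all
  show ?thesis
  proof (cases "oidx \<sigma> s \<ge> 0")
    case True
    have "cl b \<inter> pfx i = {l (nat (oidx \<sigma> s))}" using insertion_sibling_leaf[OF t _ k sp] s True by simp
    then have "cl b \<inter> X0 = {l (nat (oidx \<sigma> s))}"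
      using X0b ola(2) X0(2) partner_in_insertion_sibling(1)[OF k nm t sp s] True by auto
    moreover have "oidx \<sigma> (Leaf (l (nat (oidx \<sigma> s)))) = oidx \<sigma> s"
      using partner_in_insertion_sibling(1,4)[OF k nm t sp s] l_in_sigma_l k True by simp
    ultimately show ?thesis using restrict_single[OF db \<open>cl b \<inter> X0 = _\<close>] ola(1) by auto
  next
    case False
    define q where "q = nat (- oidx \<sigma> s)"
    obtain w wa wb where W: "w \<in> subtrees b" "w = Node wa wb \<or> w = Node wb wa" "cl b \<inter> pfx i \<subseteq> cl w"
      "l q \<in> cl wa \<inter> X0" "\<forall>y\<in>cl wa \<inter> pfx i. q \<le> \<sigma> y" "l (partner q) \<in> cl wb \<inter> X0" "\<sigma> (l (partner q)) < q"
      using partner_block_cherry[OF t sp s] False unfolding q_def by (metis not_le)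
    have wt: "w \<in> subtrees t" using W(1) bt subtrees_trans by blast
    have "cl wa \<inter> X0 \<noteq> {}" "cl wb \<inter> X0 \<noteq> {}" using W(4,6) by blast+
    then obtain ua ub where u: "restrict X0 wa = Some ua" "restrict X0 wb = Some ub"
      using restrict_None[of X0 wa] restrict_None[of X0 wb] by fastforce
    have cl_u: "cl ua = cl wa \<inter> X0" "cl ub = cl wb \<inter> X0" using restrict_cl u by blast+
    have "\<rho> \<notin> cl wa" using rho_notin_subtree[OF t wt] W(2) by auto
    then have "cl ua \<subseteq> cl wa \<inter> pfx i" using cl_u(1) block_inv_subset[OF inv X0(1)] by blast
    have "q < n"
      using partner_in_insertion_sibling(1,4)[OF k nm t sp s] False k unfolding q_def by simp
    then have "mu \<sigma> ua \<le> q" using mu_le[of "l q" ua \<sigma>] W(4) cl_u(1) l_in_sigma_l[of q] by simp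
    moreover have "q \<le> mu \<sigma> ua"
    proof -
      obtain y where y: "y \<in> cl ua" "\<sigma> y = mu \<sigma> ua" using mu_in[of \<sigma> ua] by (metis imageE)
      then have "y \<in> cl wa \<inter> pfx i" using \<open>cl ua \<subseteq> cl wa \<inter> pfx i\<close> by blast
      with W(5) have "q \<le> \<sigma> y" by (rule bspec)
      then show ?thesis using y(2) by simp
    qed
    ultimately have "mu \<sigma> ua = q" by simp
    moreover have "mu \<sigma> ub < q" using mu_le[of "l (partner q)" ub \<sigma>] cl_u(2) W(6,7) by auto
    ultimately have "oidx \<sigma> (Node ua ub) = oidx \<sigma> s" "oidx \<sigma> (Node ub ua) = oidx \<sigma> s"
      using False unfolding q_def by auto
    moreover have "restrict X0 b = restrict X0 w"
      using restrict_eq_subtree[OF db W(1)] W(3) X0b by blast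
    ultimately show ?thesis using W(2) u ola(1) by auto
  qed
qed

lemma lca_cl_insert_partner_block:
  assumes t: "t \<in> Ts"
  shows "lca_cl t (insert (l (Suc i)) X0) \<inter> pfx i \<subseteq> lca_cl t X0"
proof (cases "\<rho> \<in> X0")
  case False
  have xL: "l (Suc i) \<in> L - {\<rho>}" using l_in_sigma_l k by blast
  then have rN: "\<rho> \<notin> insert (l (Suc i)) X0" using False by auto
  obtain A a b s where sp: "insertion t (Suc i) A a b" "restrict (pfx i) b = Some s"
    using insertion_exists[OF t k] by blast
  have At: "A \<in> subtrees t" and Aab: "A = Node a b \<or> A = Node b a" and xa: "l (Suc i) \<in> cl a"
    and caS: "cl a \<inter> pfx (Suc i) = {l (Suc i)}"
    using sp(1) unfolding insertion_def by auto
  have ab: "cl a \<inter> cl b = {}" using distinct_leaves_subtree[OF _ At] Ts_leaves[OF t] Aab by fastforce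
  have lp: "l (partner (Suc i)) \<in> cl b \<inter> pfx i"
    using partner_in_insertion_sibling[OF k nm t sp] by blast
  show ?thesis
  proof (intro subsetI lca_clI[OF False])
    fix y w' assume y: "y \<in> lca_cl t (insert (l (Suc i)) X0) \<inter> pfx i"
      and w': "w' \<in> subtrees t" "X0 \<subseteq> cl w'"
    show "y \<in> cl w'"
    proof (cases "l (Suc i) \<in> cl w'")
      case True
      then show ?thesis using lca_cl_subset[OF rN w'(1)] w'(2) y by blast
    next
      case False
      have "l (partner (Suc i)) \<in> cl w'" using X0(2) w'(2) by blast
      then have "A \<in> subtrees w' \<or> w' \<in> subtrees A"
        using subtrees_laminar[OF _ At w'(1)] Ts_leaves[OF t] lp Aab by fastforce
      moreover have "A \<notin> subtrees w'" using False xa Aab cl_subtree by fastforce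
      ultimately have "w' \<in> subtrees b"
        using False xa Aab cl_subtree ab \<open>l (partner (Suc i)) \<in> cl w'\<close> lp by fastforce
      then have "insert (l (Suc i)) X0 \<subseteq> cl A" using w'(2) xa Aab cl_subtree by fastforce
      then have "y \<in> cl A" using lca_cl_subset[OF rN At] y by blast
      moreover have "y \<notin> cl a"
      proof
        assume "y \<in> cl a"
        then have "y \<in> cl a \<inter> pfx (Suc i)" using y pfx_Suc[OF k] by blast
        then have "y = l (Suc i)" using caS by blast
        then show False using y l_notin_pfx[OF k lessI] by blast
      qed
      ultimately have "y \<in> cl b \<inter> pfx i" using Aab y by auto
      then show ?thesis using partner_block_covers_sibling[OF t sp w'(1)] w'(2) by blast
    qed
  qed
qed (simp add: lca_cl_def)

lemma restrict_insert_partner_block: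
  assumes t: "t \<in> Ts"
  obtains u z v where "restrict X0 t = Some u" "restrict (insert (l (Suc i)) X0) t = Some v"
    "biso v (attach (l (Suc i)) z u)" "oidx \<sigma> z = ol t0 (Suc i)" "z \<in> subtrees u"
proof -
  obtain A a b s where sp: "insertion t (Suc i) A a b" "restrict (pfx i) b = Some s"
    using insertion_exists[OF t k] by blast
  obtain z where z: "restrict X0 b = Some z" "oidx \<sigma> z = ol t0 (Suc i)"
    using restrict_partner_block_sibling[OF t sp] by blast
  have At: "A \<in> subtrees t" and Aab: "A = Node a b \<or> A = Node b a" and xa: "l (Suc i) \<in> cl a"
    and caS: "cl a \<inter> pfx (Suc i) = {l (Suc i)}"
    using sp(1) unfolding insertion_def by auto
  have "a \<in> subtrees t" "b \<in> subtrees t" using insertion_subtrees sp(1) by blast+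
  have xX0: "l (Suc i) \<notin> X0"
    using block_inv_subset[OF inv X0(1)] l_notin_pfx[OF k lessI] l_in_sigma_l[OF k] by auto
  have ca: "cl a \<inter> insert (l (Suc i)) X0 = {l (Suc i)}"
    using caS xa block_inv_subset[OF inv X0(1)] rho_notin_subtree[OF t \<open>a \<in> subtrees t\<close>] pfx_Suc[OF k] by blast
  have cb: "cl b \<inter> X0 \<noteq> {}" using z(1) restrict_None by (metis option.distinct(1))
  obtain u z' v where "restrict X0 t = Some u" "restrict X0 b = Some z'"
      "restrict (insert (l (Suc i)) X0) t = Some v" "biso v (attach (l (Suc i)) z' u)"
    using restrict_insert_attach[OF _ At Aab xa ca cb xX0] Ts_leaves[OF t] by blast
  moreover have "z' = z" using calculation(2) z(1) by simp
  ultimately have "restrict X0 t = Some u" "restrict (insert (l (Suc i)) X0) t = Some v"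
      "biso v (attach (l (Suc i)) z u)"
    by simp_all
  moreover have "z \<in> subtrees u"
    using restrict_subtree_in_subtrees[OF \<open>b \<in> subtrees t\<close> calculation(1) z(1)] .
  ultimately show ?thesis using that z(2) by blast
qed

text \<open>All trees attach \<open>l (Suc i)\<close> above a vertex of the same index in their isomorphic
  restrictions to \<open>X0\<close>, and the index determines that vertex.\<close>

lemma iso_insert_partner_block:
  assumes "t1 \<in> Ts" "t2 \<in> Ts"
  shows "rel_option biso (restrict (insert (l (Suc i)) X0) t1) (restrict (insert (l (Suc i)) X0) t2)"
proof -
  obtain u1 z1 v1 where R1: "restrict X0 t1 = Some u1" "restrict (insert (l (Suc i)) X0) t1 = Some v1"
      "biso v1 (attach (l (Suc i)) z1 u1)" "oidx \<sigma> z1 = ol t0 (Suc i)" "z1 \<in> subtrees u1"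
    using restrict_insert_partner_block[OF assms(1)] by blast
  obtain u2 z2 v2 where R2: "restrict X0 t2 = Some u2" "restrict (insert (l (Suc i)) X0) t2 = Some v2"
      "biso v2 (attach (l (Suc i)) z2 u2)" "oidx \<sigma> z2 = ol t0 (Suc i)" "z2 \<in> subtrees u2"
    using restrict_insert_partner_block[OF assms(2)] by blast
  have "biso u1 u2" using block_inv_iso[OF inv] X0(1) assms R1(1) R2(1) by fastforce
  moreover have "distinct (leaves u1)" using restrict_distinct[OF R1(1)] Ts_leaves assms(1) by blast
  moreover have "inj_on \<sigma> (cl u1)"
    using restrict_cl[OF R1(1)] Ts_leaves[OF assms(1)] sigma_inj inj_on_subset by (metis Int_lower1)
  ultimately have "biso (attach (l (Suc i)) z1 u1) (attach (l (Suc i)) z2 u2)"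
    using biso_attach[OF _ _ _ R1(5) R2(5)] R1(4) R2(4) by simp
  then have "biso v1 v2" using R1(3) R2(3) biso_trans biso_sym by metis
  then show ?thesis using R1(2) R2(2) by simp
qed

lemma separated_insert_partner_block:
  assumes XY: "X \<in> insert (insert (l (Suc i)) X0) (P - {X0})" "Y \<in> insert (insert (l (Suc i)) X0) (P - {X0})"
    "X \<noteq> Y" and t: "t \<in> Ts" and w: "w \<in> subtrees t"
  shows "\<not> (cl w \<inter> X \<noteq> {} \<and> cl w \<inter> Y \<noteq> {} \<and> cl w \<inter> pfx (Suc i) \<subseteq> lca_cl t X \<inter> lca_cl t Y)"
proof
  let ?N = "insert (l (Suc i)) X0"
  define f where "f Z = (if Z = ?N then X0 else Z)" for Z
  assume H: "cl w \<inter> X \<noteq> {} \<and> cl w \<inter> Y \<noteq> {} \<and> cl w \<inter> pfx (Suc i) \<subseteq> lca_cl t X \<inter> lca_cl t Y"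
  have fP: "f Z \<in> P" if "Z \<in> insert ?N (P - {X0})" for Z using that X0(1) unfolding f_def by auto
  have "f X \<noteq> f Y"
  proof (cases "X = ?N \<or> Y = ?N")
    case True
    then show ?thesis using XY unfolding f_def by auto
  next
    case False
    then show ?thesis using XY(3) unfolding f_def by simp
  qed
  have to_old: "cl w \<inter> f Z \<noteq> {} \<and> cl w \<inter> pfx i \<subseteq> lca_cl t (f Z)"
    if Z: "Z \<in> insert ?N (P - {X0})" "Z' \<in> insert ?N (P - {X0})" "Z \<noteq> Z'" "cl w \<inter> Z \<noteq> {}"
      "cl w \<inter> Z' \<noteq> {}" "cl w \<inter> pfx (Suc i) \<subseteq> lca_cl t Z" for Z Z'
  proof (cases "Z = ?N")
    case True
    then have "Z' \<in> P" using Z(2,3) by auto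
    have "cl w \<inter> X0 \<noteq> {}"
    proof (cases "l (Suc i) \<in> cl w")
      case True
      then show ?thesis
        using partner_in_cl_if_meets_block[OF inv k nm t w True \<open>Z' \<in> P\<close> Z(5)] X0(2) by blast
    qed (use Z(4) \<open>Z = ?N\<close> in blast)
    moreover have "cl w \<inter> pfx i \<subseteq> lca_cl t X0"
      using Z(6) True lca_cl_insert_partner_block[OF t] pfx_subset_Suc by auto
    ultimately show ?thesis using True unfolding f_def by simp
  next
    case False
    then show ?thesis using Z(4,6) pfx_subset_Suc unfolding f_def by auto
  qed
  have "cl w \<inter> f X \<noteq> {} \<and> cl w \<inter> pfx i \<subseteq> lca_cl t (f X)" using to_old[OF XY] H by blast
  moreover have "cl w \<inter> f Y \<noteq> {} \<and> cl w \<inter> pfx i \<subseteq> lca_cl t (f Y)"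
    using to_old[OF XY(2,1) XY(3)[symmetric]] H by blast
  moreover have "\<not> (cl w \<inter> f X \<noteq> {} \<and> cl w \<inter> f Y \<noteq> {} \<and> cl w \<inter> pfx i \<subseteq> lca_cl t (f X) \<inter> lca_cl t (f Y))"
    using block_inv_separated[OF inv] fP[OF XY(1)] fP[OF XY(2)] \<open>f X \<noteq> f Y\<close> t w by blast
  ultimately show False by blast
qed

lemma min_insert_partner_block:
  assumes X: "X \<in> insert (insert (l (Suc i)) X0) (P - {X0})" "\<rho> \<notin> X" and t: "t \<in> Ts"
    and y: "y \<in> lca_cl t X \<inter> pfx (Suc i)"
  shows "Min (\<sigma> ` X) \<le> \<sigma> y"
proof -
  have xi: "\<sigma> (l (Suc i)) = Suc i" using l_in_sigma_l[OF k] by blast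
  have fin: "finite Z" if "Z \<in> P" for Z
  proof -
    have "Z \<subseteq> L" using block_inv_subset[OF inv that] pfx_subset[of i] rhoL by blast
    then show ?thesis using finite_subset finL by blast
  qed
  have y_cases: "y = l (Suc i) \<or> y \<in> pfx i" using y pfx_Suc[OF k] by blast
  show ?thesis
  proof (cases "X = insert (l (Suc i)) X0")
    case True
    then have "\<rho> \<notin> X0" using X(2) by simp
    have "y \<in> pfx i \<Longrightarrow> Min (\<sigma> ` X0) \<le> \<sigma> y"
      using block_inv_min[OF inv] X0(1) \<open>\<rho> \<notin> X0\<close> t y lca_cl_insert_partner_block[OF t] True by blast
    moreover have "Min (\<sigma> ` X) \<le> Min (\<sigma> ` X0)"
      by (rule Min_antimono) (use X0(2) fin[OF X0(1)] True in auto)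
    moreover have "Min (\<sigma> ` X) \<le> \<sigma> (l (Suc i))" using True fin[OF X0(1)] by simp
    ultimately show ?thesis using y_cases True by fastforce
  next
    case False
    then have XP: "X \<in> P" using X(1) by auto
    obtain z where z: "z \<in> X" using block_inv_nonempty[OF inv] XP by blast
    then have "\<sigma> z \<le> i" using block_inv_subset[OF inv XP] X(2) sigma_pfx by blast
    moreover have "Min (\<sigma> ` X) \<le> \<sigma> z" using z fin[OF XP] by simp
    ultimately have "y = l (Suc i) \<Longrightarrow> Min (\<sigma> ` X) \<le> \<sigma> y" using xi by simp
    moreover have "y \<in> pfx i \<Longrightarrow> Min (\<sigma> ` X) \<le> \<sigma> y"
      using block_inv_min[OF inv] XP X(2) t y by blast
    ultimately show ?thesis using y_cases by blast
  qed
qed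

lemma block_inv_Suc_join:
  "block_inv (Suc i) (insert (insert (l (Suc i)) X0) (P - {X0}))" (is "block_inv _ ?P'")
proof (rule block_invI)
  let ?N = "insert (l (Suc i)) X0"
  have xP: "\<forall>Y\<in>P. l (Suc i) \<notin> Y"
    using block_inv_Union[OF inv] l_notin_pfx[OF k lessI] l_in_sigma_l[OF k] by auto
  have MM: "mism (Suc i) = mism i" using mism_Suc_notin(1)[OF nm] .
  have finP: "finite P" using block_inv_finite[OF inv] .
  show "finite ?P'" using finP by simp
  show "\<forall>X\<in>?P'. X \<noteq> {}" using block_inv_nonempty[OF inv] by auto
  show "\<forall>X\<in>?P'. \<forall>Y\<in>?P'. X \<noteq> Y \<longrightarrow> X \<inter> Y = {}"
  proof (intro ballI impI)
    fix X Y assume "X \<in> ?P'" "Y \<in> ?P'" "X \<noteq> Y"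
    then consider "X = ?N" "Y \<in> P - {X0}" | "Y = ?N" "X \<in> P - {X0}" | "X \<in> P" "Y \<in> P" by auto
    then show "X \<inter> Y = {}" using block_inv_disjoint[OF inv] X0(1) xP \<open>X \<noteq> Y\<close> by cases blast+
  qed
  have "\<Union>?P' = insert (l (Suc i)) (\<Union>P)" using X0(1) by auto
  then show "\<Union>?P' = insert \<rho> (pfx (Suc i))" using block_inv_Union[OF inv] pfx_Suc[OF k] by auto
  have "?N \<notin> P" using xP by blast
  then have "card ?P' = Suc (card (P - {X0}))" using finP by (intro card_insert_disjoint) auto
  also have "\<dots> = card P" using card_Suc_Diff1[OF finP X0(1)] .
  finally have "card ?P' = card P" .
  then show "card ?P' = card (mism (Suc i)) + 1" using block_inv_card[OF inv] MM by simp
  obtain X where "X \<in> P" "\<rho> \<in> X" "l 0 \<in> X" using block_inv_root[OF inv] by blast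
  then show "\<exists>X\<in>?P'. \<rho> \<in> X \<and> l 0 \<in> X" by (cases "X = X0") auto
  show "\<forall>j. 1 \<le> j \<and> j \<le> Suc i \<and> j \<notin> mism (Suc i) \<longrightarrow> (\<exists>X\<in>?P'. l j \<in> X \<and> l (partner j) \<in> X)"
  proof (intro allI impI)
    fix j assume j: "1 \<le> j \<and> j \<le> Suc i \<and> j \<notin> mism (Suc i)"
    show "\<exists>X\<in>?P'. l j \<in> X \<and> l (partner j) \<in> X"
    proof (cases "j = Suc i")
      case False
      then obtain X where "X \<in> P" "l j \<in> X" "l (partner j) \<in> X"
        using block_inv_partner[OF inv] j MM by fastforce
      then show ?thesis by (cases "X = X0") auto
    qed (use X0(2) in auto)
  qed
  show "\<forall>X\<in>?P'. \<forall>t1\<in>Ts. \<forall>t2\<in>Ts. rel_option biso (restrict X t1) (restrict X t2)"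
    using block_inv_iso[OF inv] iso_insert_partner_block by auto
  show "\<forall>X\<in>?P'. \<forall>Y\<in>?P'. X \<noteq> Y \<longrightarrow> (\<forall>t\<in>Ts. \<forall>w\<in>subtrees t.
      \<not> (cl w \<inter> X \<noteq> {} \<and> cl w \<inter> Y \<noteq> {} \<and> cl w \<inter> pfx (Suc i) \<subseteq> lca_cl t X \<inter> lca_cl t Y))"
    using separated_insert_partner_block by blast
  show "\<forall>X\<in>?P'. \<rho> \<notin> X \<longrightarrow> (\<forall>t\<in>Ts. \<forall>y\<in>lca_cl t X \<inter> pfx (Suc i). Min (\<sigma> ` X) \<le> \<sigma> y)"
    using min_insert_partner_block by blast
qed

end

lemma block_inv_Suc_agree:
  assumes inv: "block_inv i P" and k: "Suc i < n" and nm: "Suc i \<notin> mism (Suc i)"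
  shows "\<exists>P'. block_inv (Suc i) P'"
proof -
  obtain A a b s where "insertion t0 (Suc i) A a b" "restrict (pfx i) b = Some s"
    using insertion_exists[OF t0 k] by blast
  then have "l (partner (Suc i)) \<in> \<Union>P"
    using partner_in_insertion_sibling[OF k nm t0] block_inv_Union[OF inv] by blast
  then obtain X0 where "X0 \<in> P" "l (partner (Suc i)) \<in> X0" by blast
  then show ?thesis using block_inv_Suc_join[OF inv k nm] by blast
qed

context
  fixes i P
  assumes inv: "block_inv i P" and k: "Suc i < n"
begin

lemma l_Suc_notin_blocks: "\<forall>Y\<in>P. l (Suc i) \<notin> Y"
  using block_inv_Union[OF inv] l_notin_pfx[OF k lessI] l_in_sigma_l[OF k] by auto

lemma separated_insert_singleton:
  assumes XY: "X \<in> insert {l (Suc i)} P" "Y \<in> insert {l (Suc i)} P" "X \<noteq> Y"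
    and t: "t \<in> Ts" and w: "w \<in> subtrees t"
  shows "\<not> (cl w \<inter> X \<noteq> {} \<and> cl w \<inter> Y \<noteq> {} \<and> cl w \<inter> pfx (Suc i) \<subseteq> lca_cl t X \<inter> lca_cl t Y)"
proof
  assume H: "cl w \<inter> X \<noteq> {} \<and> cl w \<inter> Y \<noteq> {} \<and> cl w \<inter> pfx (Suc i) \<subseteq> lca_cl t X \<inter> lca_cl t Y"
  have x_lca: "lca_cl t {l (Suc i)} = {l (Suc i)}" using lca_cl_singleton[OF t] l_in_sigma_l[OF k] by blast
  have old: "cl w \<inter> pfx i \<noteq> {}" if "Z \<in> P" "cl w \<inter> Z \<noteq> {}" for Z
    using block_inv_subset[OF inv that(1)] rho_notin_subtree[OF t w] that(2) by blast
  have single: False if "Z \<in> P" "cl w \<inter> Z \<noteq> {}" "cl w \<inter> pfx (Suc i) \<subseteq> {l (Suc i)}" for Z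
    using old[OF that(1,2)] that(3) pfx_Suc[OF k] l_notin_pfx[OF k lessI] by blast
  have "X \<noteq> {l (Suc i)}"
  proof
    assume "X = {l (Suc i)}"
    then show False using single[of Y] XY H x_lca by auto
  qed
  moreover have "Y \<noteq> {l (Suc i)}"
  proof
    assume "Y = {l (Suc i)}"
    then show False using single[of X] XY H x_lca by auto
  qed
  ultimately have "X \<in> P" "Y \<in> P" using XY by auto
  moreover have "cl w \<inter> pfx i \<subseteq> lca_cl t X \<inter> lca_cl t Y" using H pfx_subset_Suc by auto
  moreover have "\<not> (cl w \<inter> X \<noteq> {} \<and> cl w \<inter> Y \<noteq> {} \<and> cl w \<inter> pfx i \<subseteq> lca_cl t X \<inter> lca_cl t Y)"
    using block_inv_separated[OF inv] calculation(1,2) XY(3) t w by blast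
  ultimately show False using H by blast
qed

lemma min_insert_singleton:
  assumes X: "X \<in> insert {l (Suc i)} P" "\<rho> \<notin> X" and t: "t \<in> Ts"
    and y: "y \<in> lca_cl t X \<inter> pfx (Suc i)"
  shows "Min (\<sigma> ` X) \<le> \<sigma> y"
proof (cases "X = {l (Suc i)}")
  case True
  then show ?thesis using y lca_cl_singleton[OF t] l_in_sigma_l[OF k] by auto
next
  case False
  then have XP: "X \<in> P" using X(1) by auto
  have "X \<subseteq> L" using block_inv_subset[OF inv XP] pfx_subset[of i] rhoL by blast
  then have finX: "finite X" using finite_subset finL by blast
  obtain z where z: "z \<in> X" using block_inv_nonempty[OF inv] XP by blast
  then have "\<sigma> z \<le> i" using block_inv_subset[OF inv XP] X(2) sigma_pfx by blast
  moreover have "Min (\<sigma> ` X) \<le> \<sigma> z" using z finX by simp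
  moreover have "y \<in> pfx i \<Longrightarrow> Min (\<sigma> ` X) \<le> \<sigma> y" using block_inv_min[OF inv] XP X(2) t y by blast
  moreover have "y = l (Suc i) \<or> y \<in> pfx i" using y pfx_Suc[OF k] by blast
  ultimately show ?thesis using l_in_sigma_l[OF k] by auto
qed

lemma block_inv_Suc_new:
  assumes mm: "Suc i \<in> mism (Suc i)"
  shows "block_inv (Suc i) (insert {l (Suc i)} P)" (is "block_inv _ ?P'")
proof (rule block_invI)
  have MM: "mism (Suc i) = insert (Suc i) (mism i)" "Suc i \<notin> mism i" using mism_Suc_in[OF mm] by auto
  have finP: "finite P" using block_inv_finite[OF inv] .
  have xP: "{l (Suc i)} \<notin> P" using l_Suc_notin_blocks by blast
  show "finite ?P'" using finP by simp
  show "\<forall>X\<in>?P'. X \<noteq> {}" using block_inv_nonempty[OF inv] by auto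
  show "\<forall>X\<in>?P'. \<forall>Y\<in>?P'. X \<noteq> Y \<longrightarrow> X \<inter> Y = {}"
    using block_inv_disjoint[OF inv] l_Suc_notin_blocks by (simp add: disjoint_iff) blast
  show "\<Union>?P' = insert \<rho> (pfx (Suc i))" using block_inv_Union[OF inv] pfx_Suc[OF k] by auto
  have "finite (mism i)" using mismatch_upto_subset[of \<rho> L Ts \<sigma> i] finite_subset by blast
  then show "card ?P' = card (mism (Suc i)) + 1" using block_inv_card[OF inv] MM finP xP by simp
  show "\<exists>X\<in>?P'. \<rho> \<in> X \<and> l 0 \<in> X" using block_inv_root[OF inv] by auto
  show "\<forall>j. 1 \<le> j \<and> j \<le> Suc i \<and> j \<notin> mism (Suc i) \<longrightarrow> (\<exists>X\<in>?P'. l j \<in> X \<and> l (partner j) \<in> X)"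
  proof (intro allI impI)
    fix j assume j: "1 \<le> j \<and> j \<le> Suc i \<and> j \<notin> mism (Suc i)"
    then have "j \<le> i" "j \<notin> mism i" using MM(1) by (auto simp: le_Suc_eq)
    then obtain X where "X \<in> P" "l j \<in> X" "l (partner j) \<in> X" using block_inv_partner[OF inv] j by blast
    then show "\<exists>X\<in>?P'. l j \<in> X \<and> l (partner j) \<in> X" by blast
  qed
  have "restrict {l (Suc i)} t = Some (Leaf (l (Suc i)))" if "t \<in> Ts" for t
  proof (rule restrict_single)
    show "distinct (leaves t)" "cl t \<inter> {l (Suc i)} = {l (Suc i)}" using Ts_leaves[OF that] l_in_sigma_l[OF k] by auto
  qed
  then show "\<forall>X\<in>?P'. \<forall>t1\<in>Ts. \<forall>t2\<in>Ts. rel_option biso (restrict X t1) (restrict X t2)"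
    using block_inv_iso[OF inv] by auto
  show "\<forall>X\<in>?P'. \<forall>Y\<in>?P'. X \<noteq> Y \<longrightarrow> (\<forall>t\<in>Ts. \<forall>w\<in>subtrees t.
      \<not> (cl w \<inter> X \<noteq> {} \<and> cl w \<inter> Y \<noteq> {} \<and> cl w \<inter> pfx (Suc i) \<subseteq> lca_cl t X \<inter> lca_cl t Y))"
    using separated_insert_singleton by blast
  show "\<forall>X\<in>?P'. \<rho> \<notin> X \<longrightarrow> (\<forall>t\<in>Ts. \<forall>y\<in>lca_cl t X \<inter> pfx (Suc i). Min (\<sigma> ` X) \<le> \<sigma> y)"
    using min_insert_singleton by blast
qed

end

lemma block_inv_exists: "i < n \<Longrightarrow> \<exists>P. block_inv i P"
proof (induction i)
  case 0
  then show ?case using block_inv_0 by blast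
next
  case (Suc i)
  then obtain P where "block_inv i P" by auto
  then show ?case using block_inv_Suc_new block_inv_Suc_agree Suc.prems by blast
qed

definition block_tree :: "'a set \<Rightarrow> 'a btree \<Rightarrow> 'a ftree" where
  "block_tree X u = (if \<rho> \<in> X then Planted (Some u) else Unplanted u)"

definition block_component :: "'a set \<Rightarrow> 'a ftree" where
  "block_component X = block_tree X (the (restrict X t0))"

lemma prestrict_block:
  assumes t: "t \<in> Ts" and X: "X \<subseteq> L" "X - {\<rho>} \<noteq> {}"
  obtains u where "restrict X t = Some u" "prestrict \<rho> X t = Some (block_tree X u)"
    "flabels \<rho> (block_tree X u) = X" "fwf \<rho> (block_tree X u)"
proof -
  have "cl t \<inter> X = X - {\<rho>}" using Ts_leaves[OF t] X(1) by auto
  moreover obtain u where u: "restrict X t = Some u"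
    using calculation X(2) restrict_None[of X t] by fastforce
  ultimately have "cl u = X - {\<rho>}" "distinct (leaves u)"
    using restrict_cl[OF u] restrict_distinct[OF u] Ts_leaves[OF t] by auto
  then show ?thesis
    using that u unfolding prestrict_def block_tree_def by (auto simp: insert_absorb)
qed

context
  fixes P assumes inv: "block_inv (n - 1) P"
begin

lemma Union_final_blocks: "\<Union>P = L"
  using block_inv_Union[OF inv] pfx_last n_pos insert_Diff[OF rhoL] by simp

lemma final_block_has_leaf:
  assumes "X \<in> P" shows "X - {\<rho>} \<noteq> {}"
proof (cases "\<rho> \<in> X")
  case True
  obtain X\<rho> where "X\<rho> \<in> P" "\<rho> \<in> X\<rho>" "l 0 \<in> X\<rho>" using block_inv_root[OF inv] by blast
  then have "l 0 \<in> X" using block_inv_unique[OF inv assms] True by blast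
  then show ?thesis using l_in_sigma_l[OF n_pos] by blast
qed (use block_inv_nonempty[OF inv] assms in blast)

lemma block_component:
  assumes "X \<in> P"
  shows "prestrict \<rho> X t0 = Some (block_component X)" "flabels \<rho> (block_component X) = X"
    "fwf \<rho> (block_component X)"
proof -
  obtain u where "restrict X t0 = Some u" "prestrict \<rho> X t0 = Some (block_tree X u)"
    "flabels \<rho> (block_tree X u) = X" "fwf \<rho> (block_tree X u)"
    using prestrict_block[OF t0 _ final_block_has_leaf[OF assms]] Union_final_blocks assms by blast
  then show "prestrict \<rho> X t0 = Some (block_component X)" "flabels \<rho> (block_component X) = X"
    "fwf \<rho> (block_component X)"
    unfolding block_component_def by simp_all
qed

lemma inj_on_block_component: "inj_on block_component P"
  by (rule inj_onI) (metis block_component(2))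

lemma span_final_blocks_disjoint:
  assumes t: "t \<in> Ts" and XY: "X \<in> P" "Y \<in> P" "X \<noteq> Y"
  shows "span \<rho> t X \<inter> span \<rho> t Y = {}"
proof -
  have "\<not> (\<rho> \<in> X \<and> \<rho> \<in> Y)" using block_inv_disjoint[OF inv] XY by blast
  moreover have "\<not> (cl w \<inter> X \<noteq> {} \<and> cl w \<inter> Y \<noteq> {} \<and> cl w \<subseteq> lca_cl t X \<inter> lca_cl t Y)"
    if "w \<in> subtrees t" for w
  proof -
    have "cl w \<inter> pfx (n - 1) = cl w" using cl_subtree_L[OF t that] pfx_last n_pos by auto
    moreover have "\<not> (cl w \<inter> X \<noteq> {} \<and> cl w \<inter> Y \<noteq> {} \<and> cl w \<inter> pfx (n - 1) \<subseteq> lca_cl t X \<inter> lca_cl t Y)"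
      using block_inv_separated[OF inv] XY t that by blast
    ultimately show ?thesis by simp
  qed
  moreover have "X \<subseteq> L" "Y \<subseteq> L" using Union_final_blocks XY by auto
  ultimately show ?thesis
    using span_eq[OF t _ final_block_has_leaf[OF XY(1)]] span_eq[OF t _ final_block_has_leaf[OF XY(2)]]
    by auto
qed

lemma agrees_with_final_blocks:
  assumes t: "t \<in> Ts"
  shows "agrees_with \<rho> L (block_component ` P) t"
  unfolding agrees_with_def
proof (intro conjI ballI impI)
  fix D assume "D \<in> block_component ` P"
  then obtain X where X: "X \<in> P" "D = block_component X" by blast
  obtain u where u: "restrict X t = Some u" "prestrict \<rho> X t = Some (block_tree X u)"
    using prestrict_block[OF t _ final_block_has_leaf[OF X(1)]] Union_final_blocks X(1) by blast
  have "rel_option biso (restrict X t) (restrict X t0)" using block_inv_iso[OF inv] X(1) t t0 by blast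
  then have "biso u (the (restrict X t0))" using u(1) by (cases "restrict X t0") auto
  then have "fiso (block_tree X u) D" unfolding X(2) block_component_def block_tree_def by simp
  then show "\<exists>X'. prestrict \<rho> (flabels \<rho> D) t = Some X' \<and> fiso X' D"
    using u(2) block_component(2)[OF X(1)] X(2) by auto
next
  fix D D' assume "D \<in> block_component ` P" "D' \<in> block_component ` P" "D \<noteq> D'"
  then obtain X Y where "X \<in> P" "Y \<in> P" "X \<noteq> Y" "D = block_component X" "D' = block_component Y"
    by blast
  then show "span \<rho> t (flabels \<rho> D) \<inter> span \<rho> t (flabels \<rho> D') = {}"
    using span_final_blocks_disjoint[OF t] block_component(2) by simp
next
  show "(\<Union>D\<in>block_component ` P. flabels \<rho> D) = L"
    using block_component(2) Union_final_blocks by simp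
qed

lemma inheritance_edge_final_blocks:
  assumes XY: "X \<in> P" "Y \<in> P" "X \<noteq> Y" and t: "t \<in> Ts"
    and anc: "panc (sroot \<rho> t X) (sroot \<rho> t Y)"
  shows "Min (\<sigma> ` (X - {\<rho>})) < Min (\<sigma> ` (Y - {\<rho>}))"
proof -
  have XL: "X \<subseteq> L" "Y \<subseteq> L" using Union_final_blocks XY by auto
  have fin: "finite (\<sigma> ` (X - {\<rho>}))" "finite (\<sigma> ` (Y - {\<rho>}))"
    using XL finL finite_subset by blast+
  have "\<sigma> ` (Y - {\<rho>}) \<noteq> {}" using final_block_has_leaf[OF XY(2)] by simp
  then obtain y where y: "y \<in> Y - {\<rho>}" "\<sigma> y = Min (\<sigma> ` (Y - {\<rho>}))"
    using Min_in[OF fin(2)] by (metis imageE)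
  have "\<sigma> ` (X - {\<rho>}) \<noteq> {}" using final_block_has_leaf[OF XY(1)] by simp
  then obtain x where x: "x \<in> X - {\<rho>}" "\<sigma> x = Min (\<sigma> ` (X - {\<rho>}))"
    using Min_in[OF fin(1)] by (metis imageE)
  have "x \<noteq> y" using x y block_inv_disjoint[OF inv] XY by blast
  moreover have "x \<in> L - {\<rho>}" "y \<in> L - {\<rho>}" using x y XL by auto
  ultimately have "\<sigma> x \<noteq> \<sigma> y" using inj_on_contraD[OF sigma_inj] by blast
  have XYne: "X \<noteq> {}" "Y \<noteq> {}" using block_inv_nonempty[OF inv] XY by blast+
  have "\<rho> \<notin> Y"
  proof
    assume "\<rho> \<in> Y"
    then have "\<rho> \<notin> X" using block_inv_disjoint[OF inv] XY by blast
    then obtain h where "sroot \<rho> t X = Some h" using sroot_lca[OF t XL(1) XYne(1)] by blast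
    then show False using anc sroot_rho[OF t \<open>\<rho> \<in> Y\<close>] by simp
  qed
  show ?thesis
  proof (cases "\<rho> \<in> X")
    case True
    obtain X\<rho> where "X\<rho> \<in> P" "\<rho> \<in> X\<rho>" "l 0 \<in> X\<rho>" using block_inv_root[OF inv] by blast
    then have "l 0 \<in> X" using block_inv_unique[OF inv XY(1)] True by blast
    then have "l 0 \<in> X - {\<rho>}" using l_in_sigma_l[OF n_pos] by blast
    then have "\<sigma> x \<le> \<sigma> (l 0)" using x(2) Min_le[OF fin(1)] by simp
    then have "\<sigma> x = 0" using l_in_sigma_l[OF n_pos] by simp
    then show ?thesis using x y \<open>\<sigma> x \<noteq> \<sigma> y\<close> by simp
  next
    case False
    obtain hX where hX: "sroot \<rho> t X = Some hX" "cl hX = lca_cl t X"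
      using sroot_lca[OF t XL(1) XYne(1) False] by blast
    obtain hY where hY: "sroot \<rho> t Y = Some hY" "Y \<subseteq> cl hY"
      using sroot_lca[OF t XL(2) XYne(2) \<open>\<rho> \<notin> Y\<close>] by blast
    have "cl hY \<subseteq> cl hX" using anc hX(1) hY(1) cl_subtree by simp
    moreover have "y \<in> pfx (n - 1)" using y XL pfx_last n_pos by auto
    ultimately have "y \<in> lca_cl t X \<inter> pfx (n - 1)" using hX(2) hY(2) y by auto
    then have "Min (\<sigma> ` X) \<le> \<sigma> y" using block_inv_min[OF inv] XY(1) False t by blast
    then show ?thesis using x y \<open>\<sigma> x \<noteq> \<sigma> y\<close> False by simp
  qed
qed

lemma aaf_final_blocks: "acyclic_agreement_forest \<rho> L Ts (block_component ` P)"
proof -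
  have "is_forest \<rho> (block_component ` P)"
    unfolding is_forest_def
  proof (intro conjI ballI impI)
    show "finite (block_component ` P)" using block_inv_finite[OF inv] by simp
    fix D D' assume "D \<in> block_component ` P"
    then show "fwf \<rho> D" using block_component(3) by blast
    assume "D' \<in> block_component ` P" "D \<noteq> D'"
    with \<open>D \<in> _\<close> obtain X Y where "X \<in> P" "Y \<in> P" "X \<noteq> Y" "D = block_component X" "D' = block_component Y"
      by blast
    then show "flabels \<rho> D \<inter> flabels \<rho> D' = {}" using block_component(2) block_inv_disjoint[OF inv] by simp
  qed
  moreover have "inheritance_graph \<rho> Ts (block_component ` P)
      \<subseteq> inv_image less_than (\<lambda>D. Min (\<sigma> ` (flabels \<rho> D - {\<rho>})))"
  proof
    fix e assume "e \<in> inheritance_graph \<rho> Ts (block_component ` P)"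
    then obtain X Y t where "X \<in> P" "Y \<in> P" "block_component X \<noteq> block_component Y" "t \<in> Ts"
      "e = (block_component X, block_component Y)"
      "panc (sroot \<rho> t (flabels \<rho> (block_component X))) (sroot \<rho> t (flabels \<rho> (block_component Y)))"
      unfolding inheritance_graph_def by blast
    then show "e \<in> inv_image less_than (\<lambda>D. Min (\<sigma> ` (flabels \<rho> D - {\<rho>})))"
      using inheritance_edge_final_blocks[of X Y t] block_component(2) by fastforce
  qed
  then have "acyclic (inheritance_graph \<rho> Ts (block_component ` P))"
    using acyclic_subset wf_acyclic[OF wf_inv_image[OF wf_less_than]] by blast
  ultimately show ?thesis
    unfolding acyclic_agreement_forest_def agreement_forest_def using agrees_with_final_blocks by blast
qed

end

lemma aaf_of_blocks: "\<exists>F. acyclic_agreement_forest \<rho> L Ts F \<and> card F = card (mism (n - 1)) + 1"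
proof -
  obtain P where inv: "block_inv (n - 1) P" using block_inv_exists[of "n - 1"] n_pos by auto
  then show ?thesis
    using aaf_final_blocks[OF inv] card_image[OF inj_on_block_component[OF inv]] block_inv_card[OF inv] by auto
qed

end

section \<open>From an acyclic agreement forest to a leaf ordering\<close>

definition component_of :: "'a \<Rightarrow> 'a ftree set \<Rightarrow> 'a \<Rightarrow> 'a ftree" where
  "component_of \<rho> F x = (THE C. C \<in> F \<and> x \<in> flabels \<rho> C)"

lemma component_of_eq:
  assumes "acyclic_agreement_forest \<rho> L Ts F" "C \<in> F" "x \<in> flabels \<rho> C"
  shows "component_of \<rho> F x = C"
proof -
  have D: "\<forall>C\<in>F. \<forall>C'\<in>F. C \<noteq> C' \<longrightarrow> flabels \<rho> C \<inter> flabels \<rho> C' = {}" using assms(1)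
    unfolding acyclic_agreement_forest_def agreement_forest_def is_forest_def by blast
  show ?thesis unfolding component_of_def by (rule the_equality) (use assms D in blast)+
qed

lemma component_of_in:
  assumes "acyclic_agreement_forest \<rho> L Ts F" "t \<in> Ts" "x \<in> L"
  shows "component_of \<rho> F x \<in> F" "x \<in> flabels \<rho> (component_of \<rho> F x)"
proof -
  have "(\<Union>C\<in>F. flabels \<rho> C) = L" using assms(1,2)
    unfolding acyclic_agreement_forest_def agreement_forest_def agrees_with_def by blast
  then obtain C where "C \<in> F" "x \<in> flabels \<rho> C" using assms(3) by blast
  then show "component_of \<rho> F x \<in> F" "x \<in> flabels \<rho> (component_of \<rho> F x)"
    using component_of_eq[OF assms(1)] by simp_all
qed

lemma rel_option_biso_restrict_agree:
  assumes "prestrict \<rho> K t1 = Some X1" "fiso X1 C" "prestrict \<rho> K t2 = Some X2" "fiso X2 C"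
  shows "rel_option biso (restrict K t1) (restrict K t2)"
proof (cases "\<rho> \<in> K")
  case True
  then have X: "X1 = Planted (restrict K t1)" "X2 = Planted (restrict K t2)"
    using assms(1,3) unfolding prestrict_def by auto
  then obtain oc where C: "C = Planted oc" using assms(2) by (cases C) auto
  show ?thesis
  proof (cases oc)
    case None
    then show ?thesis using assms(2,4) X C by (cases "restrict K t1"; cases "restrict K t2") auto
  next
    case (Some c)
    obtain u1 u2 where "restrict K t1 = Some u1" "biso u1 c" "restrict K t2 = Some u2" "biso u2 c"
      using assms(2,4) X C Some by (cases "restrict K t1"; cases "restrict K t2") auto
    then show ?thesis using biso_trans[OF _ biso_sym] by simp
  qed
next
  case False
  obtain u1 u2 where u: "restrict K t1 = Some u1" "X1 = Unplanted u1" "restrict K t2 = Some u2" "X2 = Unplanted u2"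
    using assms(1,3) False unfolding prestrict_def by auto
  then obtain c where c: "C = Unplanted c" "biso u1 c" "biso u2 c" using assms(2,4) by (cases C) auto
  then show ?thesis using u biso_trans[OF c(2) biso_sym[OF c(3)]] by simp
qed

context ordered_trees
begin

text \<open>Such a set has the same insertion vertex for \<open>l (Suc i)\<close> as \<open>pfx (Suc i)\<close>.\<close>

lemma sibling_restrict_insertion:
  assumes t: "t \<in> Ts" and k: "Suc i < n" and sp: "insertion t (Suc i) A a b"
    and S: "l (Suc i) \<in> S" "S \<subseteq> pfx (Suc i)" "cl b \<inter> pfx i \<subseteq> S" "cl b \<inter> pfx i \<noteq> {}"
  shows "sibling (l (Suc i)) (the (restrict S t)) = restrict (pfx i) b"
proof -
  have d: "distinct (leaves t)" "cl t = L - {\<rho>}" using Ts_leaves t by auto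
  have At: "A \<in> subtrees t" and Aab: "A = Node a b \<or> A = Node b a" and xa: "l (Suc i) \<in> cl a"
    and caS: "cl a \<inter> pfx (Suc i) = {l (Suc i)}"
    and minA: "\<forall>w\<in>subtrees t. l (Suc i) \<in> cl w \<and> cl w \<inter> pfx i \<noteq> {} \<longrightarrow> A \<in> subtrees w"
    using sp unfolding insertion_def by auto
  have dA: "distinct (leaves A)" using At d distinct_leaves_subtree by blast
  have SX: "S - {l (Suc i)} \<subseteq> pfx i" using S(2) pfx_Suc[OF k] by blast
  have "cl t \<inter> (S - {l (Suc i)}) \<noteq> {}"
    using S(3,4) l_notin_pfx[OF k lessI] insertion_subtrees[OF sp] cl_subtree by blast
  moreover have "l (Suc i) \<in> cl t" using d(2) l_in_sigma_l[OF k] by blast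
  ultimately obtain A' a' b' where sc: "A' \<in> subtrees t" "A' = Node a' b' \<or> A' = Node b' a'"
    "l (Suc i) \<in> cl a'" "cl a' \<inter> S = {l (Suc i)}" "cl b' \<inter> S \<noteq> {}"
    "sibling (l (Suc i)) (the (restrict S t)) = restrict S b'"
    "\<forall>w\<in>subtrees t. l (Suc i) \<in> cl w \<and> cl w \<inter> (S - {l (Suc i)}) \<noteq> {} \<longrightarrow> A' \<in> subtrees w"
    using sibling_restrict_lowest[OF d(1) _ S(1)] by blast
  have "cl a' \<inter> cl b' = {}" using distinct_leaves_subtree[OF d(1) sc(1)] sc(2) by auto
  obtain y where "y \<in> cl b'" "y \<in> S" using sc(5) by blast
  then have "y \<in> pfx i" using \<open>cl a' \<inter> cl b' = {}\<close> sc(3) SX by blast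
  then have "cl A' \<inter> pfx i \<noteq> {}" using \<open>y \<in> cl b'\<close> sc(2) by auto
  then have "A \<in> subtrees A'" using minA sc(1,2,3) by auto
  moreover have "cl A \<inter> (S - {l (Suc i)}) \<noteq> {}"
    using S(3,4) Aab l_notin_pfx[OF k lessI] by auto
  then have "A' \<in> subtrees A" using sc(7) At xa Aab by auto
  ultimately have "A = A'" using subtrees_antisym by blast
  then have "b' = b" using children_unique[OF Aab _ xa sc(3) dA] sc(2) by blast
  moreover have "l (Suc i) \<notin> cl b" using xa Aab distinct_leaves_subtree[OF d(1) At] by auto
  then have "cl b \<inter> S = cl b \<inter> pfx i" using S(2,3) unfolding pfx_Suc[OF k] by blast
  then have "restrict S b = restrict (pfx i) b" using restrict_cong by blast
  ultimately show ?thesis using sc(6) by simp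
qed

lemma panc_sroot_if_lca_cl_subset:
  assumes t: "t \<in> Ts" and K: "Kx \<subseteq> L" "Kx \<noteq> {}" "Ky \<subseteq> L" "Ky \<noteq> {}" "\<rho> \<notin> Ky"
    and sub: "lca_cl t Ky \<subseteq> lca_cl t Kx"
  shows "panc (sroot \<rho> t Kx) (sroot \<rho> t Ky)"
proof (cases "\<rho> \<in> Kx")
  case False
  obtain hX where hX: "sroot \<rho> t Kx = Some hX" "hX \<in> subtrees t" "cl hX = lca_cl t Kx"
    using sroot_lca[OF t K(1,2) False] by blast
  obtain hY where hY: "sroot \<rho> t Ky = Some hY" "hY \<in> subtrees t" "cl hY = lca_cl t Ky"
    using sroot_lca[OF t K(3-5)] by blast
  have "hY \<in> subtrees hX" using subtree_if_cl_subset[OF _ hY(2) hX(2)] Ts_leaves[OF t] hX(3) hY(3) sub by simp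
  then show ?thesis using hX(1) hY(1) by simp
qed (simp add: sroot_rho[OF t])

end

context ordered_trees_ref
begin

definition first_in_component :: "'a ftree set \<Rightarrow> nat \<Rightarrow> bool" where
  "first_in_component F j \<longleftrightarrow> (\<forall>y\<in>flabels \<rho> (component_of \<rho> F (l j)) - {\<rho>}. j \<le> \<sigma> y)"

context
  fixes F
  assumes aaf: "acyclic_agreement_forest \<rho> L Ts F"
    and resp: "\<forall>x\<in>L - {\<rho>}. \<forall>y\<in>L - {\<rho>}.
      (component_of \<rho> F x, component_of \<rho> F y) \<in> inheritance_graph \<rho> Ts F \<longrightarrow> \<sigma> x < \<sigma> y"
begin

lemma aaf_agrees: "t \<in> Ts \<Longrightarrow> agrees_with \<rho> L F t"
  using aaf unfolding acyclic_agreement_forest_def agreement_forest_def by blast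

lemma component_labels_subset: "x \<in> L \<Longrightarrow> flabels \<rho> (component_of \<rho> F x) \<subseteq> L"
  using aaf_agrees[OF t0] component_of_in[OF aaf t0] unfolding agrees_with_def by blast

context
  fixes i
  assumes k: "Suc i < n" and not_first: "\<not> first_in_component F (Suc i)"
begin

lemma component_has_earlier_leaf:
  obtains p where "p \<in> flabels \<rho> (component_of \<rho> F (l (Suc i)))" "p \<in> pfx i"
proof -
  obtain p where p: "p \<in> flabels \<rho> (component_of \<rho> F (l (Suc i))) - {\<rho>}" "\<sigma> p < Suc i"
    using not_first unfolding first_in_component_def by (auto simp: not_le)
  moreover have "p \<in> L" using p(1) component_labels_subset l_in_sigma_l[OF k] by blast
  ultimately show ?thesis using that unfolding pfx_def by auto
qed

lemma insertion_vertex_in_span: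
  assumes t: "t \<in> Ts" and sp: "insertion t (Suc i) A a b"
  shows "cl A \<subseteq> lca_cl t (flabels \<rho> (component_of \<rho> F (l (Suc i))))"
    and "Some A \<in> span \<rho> t (flabels \<rho> (component_of \<rho> F (l (Suc i))))"
proof -
  let ?K = "flabels \<rho> (component_of \<rho> F (l (Suc i)))"
  have x: "l (Suc i) \<in> L - {\<rho>}" "l (Suc i) \<in> ?K" using l_in_sigma_l[OF k] component_of_in[OF aaf t0] by auto
  obtain p where p: "p \<in> ?K" "p \<in> pfx i" by (rule component_has_earlier_leaf)
  have At: "A \<in> subtrees t" and xA: "l (Suc i) \<in> cl A"
    and minA: "\<forall>w\<in>subtrees t. l (Suc i) \<in> cl w \<and> cl w \<inter> pfx i \<noteq> {} \<longrightarrow> A \<in> subtrees w"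
    using sp unfolding insertion_def by auto
  show sub: "cl A \<subseteq> lca_cl t ?K"
  proof (cases "\<rho> \<in> ?K")
    case False
    show ?thesis
    proof (intro subsetI lca_clI[OF False])
      fix z w assume "z \<in> cl A" "w \<in> subtrees t" "?K \<subseteq> cl w"
      then show "z \<in> cl w" using minA x(2) p cl_subtree by blast
    qed
  qed (simp add: lca_cl_def)
  show "Some A \<in> span \<rho> t ?K"
    using span_eq[OF t component_labels_subset] x At xA sub l_in_sigma_l[OF k] by auto
qed

text \<open>A leaf of an earlier component below the insertion vertex would either put that vertex into two
  spans, or make the component of \<open>l (Suc i)\<close> an ancestor of an earlier one in the inheritance graph.\<close>

lemma insertion_sibling_in_component:
  assumes t: "t \<in> Ts" and sp: "insertion t (Suc i) A a b"
  shows "cl b \<inter> pfx i \<subseteq> flabels \<rho> (component_of \<rho> F (l (Suc i)))"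
proof
  let ?C = "\<lambda>x. component_of \<rho> F x"
  fix y assume y: "y \<in> cl b \<inter> pfx i"
  show "y \<in> flabels \<rho> (?C (l (Suc i)))"
  proof (rule ccontr)
    assume yK: "y \<notin> flabels \<rho> (?C (l (Suc i)))"
    have x: "l (Suc i) \<in> L - {\<rho>}" "\<sigma> (l (Suc i)) = Suc i" using l_in_sigma_l[OF k] by auto
    have yL: "y \<in> L - {\<rho>}" using y pfx_subset by blast
    have C: "?C (l (Suc i)) \<in> F" "l (Suc i) \<in> flabels \<rho> (?C (l (Suc i)))" "?C y \<in> F" "y \<in> flabels \<rho> (?C y)"
      using component_of_in[OF aaf t0] x yL by auto
    have "?C (l (Suc i)) \<noteq> ?C y" using yK C by auto
    have At: "A \<in> subtrees t" and yA: "y \<in> cl A"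
      using sp y unfolding insertion_def by auto
    have KyL: "flabels \<rho> (?C y) \<subseteq> L" using component_labels_subset yL by blast
    show False
    proof (cases "cl A \<subseteq> lca_cl t (flabels \<rho> (?C y))")
      case True
      then have "Some A \<in> span \<rho> t (flabels \<rho> (?C y))"
        using span_eq[OF t KyL] C(4) yL At yA by auto
      then show False
        using insertion_vertex_in_span(2)[OF t sp] aaf_agrees[OF t] C(1,3) \<open>?C (l (Suc i)) \<noteq> ?C y\<close>
        unfolding agrees_with_def by blast
    next
      case False
      then have rKy: "\<rho> \<notin> flabels \<rho> (?C y)" unfolding lca_cl_def by auto
      obtain z w' where w': "z \<in> cl A" "w' \<in> subtrees t" "flabels \<rho> (?C y) \<subseteq> cl w'" "z \<notin> cl w'"
        using False rKy unfolding lca_cl_def by auto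
      have "A \<in> subtrees w' \<or> w' \<in> subtrees A"
        using subtrees_laminar[OF _ At w'(2)] Ts_leaves[OF t] yA w'(3) C(4) by blast
      then have "w' \<in> subtrees A" using w'(1,4) cl_subtree by blast
      then have "lca_cl t (flabels \<rho> (?C y)) \<subseteq> lca_cl t (flabels \<rho> (?C (l (Suc i))))"
        using lca_cl_subset[OF rKy w'(2,3)] cl_subtree insertion_vertex_in_span(1)[OF t sp] by blast
      then have "panc (sroot \<rho> t (flabels \<rho> (?C (l (Suc i))))) (sroot \<rho> t (flabels \<rho> (?C y)))"
        using panc_sroot_if_lca_cl_subset[OF t component_labels_subset _ KyL _ rKy] x C by blast
      then have "(?C (l (Suc i)), ?C y) \<in> inheritance_graph \<rho> Ts F"
        unfolding inheritance_graph_def using C(1,3) \<open>?C (l (Suc i)) \<noteq> ?C y\<close> t by blast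
      then have "Suc i < \<sigma> y" using resp x yL by fastforce
      then show False using sigma_pfx y by fastforce
    qed
  qed
qed

lemma ola_agree_not_first:
  assumes t12: "t1 \<in> Ts" "t2 \<in> Ts"
  shows "ol t1 (Suc i) = ol t2 (Suc i)"
proof -
  let ?C = "component_of \<rho> F (l (Suc i))"
  let ?S = "flabels \<rho> ?C \<inter> pfx (Suc i)"
  have x: "l (Suc i) \<in> L - {\<rho>}" "l (Suc i) \<in> ?S" "?C \<in> F"
    using l_in_sigma_l[OF k] l_in_pfx[OF k] component_of_in[OF aaf t0] by auto
  have sib: "\<exists>s. sibling (l (Suc i)) U = Some s \<and> ol t (Suc i) = oidx \<sigma> s"
    if t: "t \<in> Ts" and U: "restrict ?S t = Some U" for t U
  proof -
    obtain A a b s where sp: "insertion t (Suc i) A a b" "restrict (pfx i) b = Some s" "ol t (Suc i) = oidx \<sigma> s"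
      using insertion_exists[OF t k] by blast
    have "cl b \<inter> pfx i \<noteq> {}" using sp(2) restrict_None by (metis option.distinct(1))
    moreover have "cl b \<inter> pfx i \<subseteq> ?S"
      using insertion_sibling_in_component[OF t sp(1)] pfx_subset_Suc by blast
    ultimately have "sibling (l (Suc i)) (the (restrict ?S t)) = restrict (pfx i) b"
      using sibling_restrict_insertion[OF t k sp(1) x(2)] by blast
    then show ?thesis using U sp by auto
  qed
  have xt: "l (Suc i) \<in> cl t1" "l (Suc i) \<in> cl t2" using Ts_leaves t12 x(1) by auto
  have xK: "l (Suc i) \<in> flabels \<rho> ?C" using x(2) by blast
  obtain u1 u2 where u: "restrict (flabels \<rho> ?C) t1 = Some u1" "restrict (flabels \<rho> ?C) t2 = Some u2"
    using restrict_Some[OF xt(1) xK] restrict_Some[OF xt(2) xK] by blast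
  have "\<exists>X. prestrict \<rho> (flabels \<rho> ?C) t = Some X \<and> fiso X ?C" if "t \<in> Ts" for t
    using aaf_agrees[OF that] x(3) unfolding agrees_with_def by blast
  then obtain X1 X2 where X: "prestrict \<rho> (flabels \<rho> ?C) t1 = Some X1" "fiso X1 ?C"
    "prestrict \<rho> (flabels \<rho> ?C) t2 = Some X2" "fiso X2 ?C"
    using t12 by blast
  have "biso u1 u2" using rel_option_biso_restrict_agree[OF X] u by simp
  then have r: "rel_option biso (restrict (pfx (Suc i)) u1) (restrict (pfx (Suc i)) u2)"
    by (rule rel_option_biso_restrict)
  obtain U1 U2 where U: "restrict ?S t1 = Some U1" "restrict ?S t2 = Some U2"
    using restrict_Some[OF xt(1) x(2)] restrict_Some[OF xt(2) x(2)] by blast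
  have "biso U1 U2"
    using r restrict_restrict[OF u(1), of "pfx (Suc i)"] restrict_restrict[OF u(2), of "pfx (Suc i)"] U by simp
  obtain s1 where s1: "sibling (l (Suc i)) U1 = Some s1" "ol t1 (Suc i) = oidx \<sigma> s1"
    using sib[OF t12(1) U(1)] by blast
  obtain s2 where s2: "sibling (l (Suc i)) U2 = Some s2" "ol t2 (Suc i) = oidx \<sigma> s2"
    using sib[OF t12(2) U(2)] by blast
  have "distinct (leaves U1)" using restrict_distinct[OF U(1)] Ts_leaves t12(1) by blast
  then obtain s2' where "sibling (l (Suc i)) U2 = Some s2'" "biso s1 s2'"
    using sibling_biso[OF \<open>biso U1 U2\<close> _ s1(1)] by blast
  then have "biso s1 s2" using s2(1) by simp
  then show ?thesis using s1(2) s2(2) biso_oidx[of s1 s2] by simp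
qed

text \<open>The OLA value \<open>-j\<close> would make \<open>l j\<close> the larger of two minima inside the component of
  \<open>l (Suc i)\<close>, so \<open>l j\<close> is not the first leaf of its component.\<close>

lemma ola_not_first_component_index:
  assumes j: "j \<in> mism i" and firsts: "mism i \<subseteq> {j. 1 \<le> j \<and> first_in_component F j}"
  shows "ol t0 (Suc i) \<noteq> - int j"
proof
  let ?C = "component_of \<rho> F (l (Suc i))"
  assume ola: "ol t0 (Suc i) = - int j"
  obtain A a b s where sp: "insertion t0 (Suc i) A a b" "restrict (pfx i) b = Some s" "ol t0 (Suc i) = oidx \<sigma> s"
    using insertion_exists[OF t0 k] by blast
  have j1: "1 \<le> j" "first_in_component F j" using firsts j by auto
  have f: "distinct (leaves s)" "inj_on \<sigma> (cl s)" "cl s = cl b \<inter> pfx i"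
    using insertion_sibling_props[OF t0 sp(1)] sp(2) by auto
  obtain u1 u2 where "s = Node u1 u2" using ola sp(3) j1(1) by (cases s) auto
  then obtain y z where Q: "y \<in> cl s" "\<sigma> y = j" "z \<in> cl s" "\<sigma> z < j"
    using oidx_NodeE[of u1 u2 \<sigma>] f ola sp(3) by auto
  have yz: "y \<in> flabels \<rho> ?C" "z \<in> flabels \<rho> ?C" "y \<in> L - {\<rho>}" "z \<in> L - {\<rho>}"
    using Q(1,3) f(3) insertion_sibling_in_component[OF t0 sp(1)] pfx_subset by blast+
  have "l j = y" using l_sigma yz(3) Q(2) by blast
  then have "component_of \<rho> F (l j) = ?C"
    using component_of_eq[OF aaf _ yz(1)] component_of_in[OF aaf t0] l_in_sigma_l[OF k] by auto
  then have "z \<in> flabels \<rho> (component_of \<rho> F (l j)) - {\<rho>}" using yz by simp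
  then have "j \<le> \<sigma> z" using j1(2) unfolding first_in_component_def by blast
  then show False using Q(4) by simp
qed

lemma not_first_not_mismatch:
  assumes "mism i \<subseteq> {j. 1 \<le> j \<and> first_in_component F j}"
  shows "Suc i \<notin> mism (Suc i)"
proof -
  have "\<not> new_mismatch i"
    unfolding new_mismatch_def using ola_agree_not_first ola_not_first_component_index[OF _ assms] t0
    by metis
  then show ?thesis using Suc_in_mism_iff[of i] by blast
qed

end

lemma mism_subset_first: "i < n \<Longrightarrow> mism i \<subseteq> {j. 1 \<le> j \<and> first_in_component F j}"
proof (induction i)
  case (Suc i)
  then have IH: "mism i \<subseteq> {j. 1 \<le> j \<and> first_in_component F j}" by simp
  show ?case
  proof (cases "first_in_component F (Suc i)")
    case True
    then show ?thesis using mismatch_upto_Suc_subset[of \<rho> L Ts \<sigma> i] IH by auto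
  next
    case False
    then have "mism (Suc i) = mism i" using not_first_not_mismatch[OF Suc.prems False IH] mism_Suc_notin(1) by blast
    then show ?thesis using IH by simp
  qed
qed simp

text \<open>Each mismatch is the first leaf of a component other than the root component.\<close>

lemma card_mism_le_aaf: "card (mism (n - 1)) + 1 \<le> card F"
proof -
  let ?C = "\<lambda>j. component_of \<rho> F (l j)"
  define FS where "FS = {j. 1 \<le> j \<and> j < n \<and> first_in_component F j}"
  have finF: "finite F" using aaf unfolding acyclic_agreement_forest_def agreement_forest_def is_forest_def by blast
  have C: "?C j \<in> F" "l j \<in> flabels \<rho> (?C j)" "l j \<in> L - {\<rho>}" "\<sigma> (l j) = j" if "j < n" for j
    using component_of_in[OF aaf t0] l_in_sigma_l[OF that] by auto
  have first: "j \<le> \<sigma> y" if "j \<in> FS" "y \<in> flabels \<rho> (?C j) - {\<rho>}" for j y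
    using that unfolding FS_def first_in_component_def by blast
  have "mism (n - 1) \<subseteq> FS"
  proof
    fix j assume "j \<in> mism (n - 1)"
    then have "j \<in> {1..n - 1}" "1 \<le> j \<and> first_in_component F j"
      using mism_subset_first[of "n - 1"] mismatch_upto_subset[of \<rho> L Ts \<sigma> "n - 1"] n_pos by auto
    then show "j \<in> FS" unfolding FS_def by auto
  qed
  moreover have "finite FS" by (rule finite_subset[of _ "{..<n}"]) (auto simp: FS_def)
  ultimately have "card (mism (n - 1)) \<le> card FS" by (rule card_mono[rotated])
  also have "card FS = card (?C ` FS)"
  proof (rule card_image[symmetric], rule inj_onI)
    fix j j' assume jj: "j \<in> FS" "j' \<in> FS" "?C j = ?C j'"
    have n: "j < n" "j' < n" using jj(1,2) unfolding FS_def by auto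
    have "j \<le> \<sigma> (l j')" using first[OF jj(1)] C(2,3)[OF n(2)] jj(3) by simp
    moreover have "j' \<le> \<sigma> (l j)" using first[OF jj(2)] C(2,3)[OF n(1)] jj(3) by simp
    ultimately show "j = j'" using C(4) n by fastforce
  qed
  also have "\<dots> \<le> card (F - {?C 0})"
  proof (rule card_mono)
    show "?C ` FS \<subseteq> F - {?C 0}"
    proof
      fix D assume "D \<in> ?C ` FS"
      then obtain j where j: "j \<in> FS" "D = ?C j" by blast
      then have "j < n" "0 < j" unfolding FS_def by auto
      have "D \<noteq> ?C 0"
      proof
        assume "D = ?C 0"
        then have "j \<le> \<sigma> (l 0)" using first[OF j(1)] C(2,3)[OF n_pos] j(2) by simp
        then show False using \<open>0 < j\<close> C(4)[OF n_pos] by simp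
      qed
      then show "D \<in> F - {?C 0}" using j(2) C(1)[OF \<open>j < n\<close>] by blast
    qed
  qed (use finF in simp)
  also have "\<dots> = card F - 1" using C(1)[OF n_pos] finF by simp
  finally show ?thesis using C(1)[OF n_pos] finF card_0_eq[OF finF] by fastforce
qed
end

end

lemma rank_mono:
  assumes "finite A" "x \<in> A" "y \<in> A" "(k :: 'a \<Rightarrow> nat) x < k y"
  shows "card {z\<in>A. k z < k x} < card {z\<in>A. k z < k y}"
  by (rule psubset_card_mono) (use assms in auto)

lemma rank_bij:
  assumes fin: "finite A" and inj: "inj_on (k :: 'a \<Rightarrow> nat) A"
  shows "bij_betw (\<lambda>x. card {z\<in>A. k z < k x}) A {0..<card A}"
proof -
  let ?r = "\<lambda>x. card {z\<in>A. k z < k x}"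
  have ri: "inj_on ?r A"
  proof (rule inj_onI, rule ccontr)
    fix x y assume xy: "x \<in> A" "y \<in> A" "?r x = ?r y" "x \<noteq> y"
    then have "k x < k y \<or> k y < k x" using inj by (metis inj_onD linorder_neqE_nat)
    then show False using rank_mono[OF fin xy(1,2), of k] rank_mono[OF fin xy(2,1), of k] xy(3) by auto
  qed
  have "?r x < card A" if "x \<in> A" for x
    using psubset_card_mono[OF fin, of "{z\<in>A. k z < k x}"] that by blast
  then have rs: "?r ` A \<subseteq> {0..<card A}" by auto
  have "?r ` A = {0..<card A}"
    using card_subset_eq[OF _ rs] card_image[OF ri] by simp
  then show ?thesis using ri unfolding bij_betw_def by blast
qed

lemma ex_bij_betw_strict_mono_on:
  fixes k :: "'a \<Rightarrow> nat"
  assumes "finite A"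
  shows "\<exists>\<sigma>. bij_betw \<sigma> A {0..<card A} \<and> (\<forall>x\<in>A. \<forall>y\<in>A. k x < k y \<longrightarrow> \<sigma> x < \<sigma> y)"
proof -
  obtain g where g: "bij_betw g A {0..<card A}" using ex_bij_betw_finite_nat[OF assms] by blast
  define key where "key x = k x * card A + g x" for x
  have g_less: "g x < card A" if "x \<in> A" for x using g that bij_betwE by fastforce
  have "inj_on key A"
  proof (rule inj_onI)
    fix x y assume "x \<in> A" "y \<in> A" "key x = key y"
    then have "g x = g y" using g_less unfolding key_def by (metis mod_mult_self3 mod_less)
    then show "x = y" using g \<open>x \<in> A\<close> \<open>y \<in> A\<close> by (metis bij_betw_imp_inj_on inj_onD)
  qed
  moreover have "key x < key y" if "x \<in> A" "y \<in> A" "k x < k y" for x y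
  proof -
    have "key x < (k x + 1) * card A" unfolding key_def using g_less[OF that(1)] by simp
    also have "\<dots> \<le> k y * card A" using that(3) by (intro mult_right_mono) auto
    finally show ?thesis unfolding key_def by simp
  qed
  ultimately show ?thesis
    using rank_bij[OF assms, of key] rank_mono[OF assms, of _ _ key] by blast
qed

lemma trancl_card_strict_mono:
  assumes "finite F" "acyclic G" "G \<subseteq> F \<times> F" "(C, C') \<in> G"
  shows "card {D\<in>F. (D, C) \<in> G\<^sup>+} < card {D\<in>F. (D, C') \<in> G\<^sup>+}"
proof (rule psubset_card_mono)
  show "finite {D\<in>F. (D, C') \<in> G\<^sup>+}" using assms(1) by simp
  have "C \<in> {D\<in>F. (D, C') \<in> G\<^sup>+}" "C \<notin> {D\<in>F. (D, C) \<in> G\<^sup>+}"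
    using assms(2-4) unfolding acyclic_def by auto
  then show "{D\<in>F. (D, C) \<in> G\<^sup>+} \<subset> {D\<in>F. (D, C') \<in> G\<^sup>+}"
    using assms(4) trancl_into_trancl by fastforce
qed

text \<open>A leaf ordering that lists the components of an acyclic agreement forest in a topological
  order of its inheritance graph.\<close>

lemma ordering_of_aaf:
  assumes finL: "finite L" and rhoL: "\<rho> \<in> L" and trees: "\<forall>t\<in>Ts. is_tree \<rho> L t" and t0: "t0 \<in> Ts"
    and aaf: "acyclic_agreement_forest \<rho> L Ts F"
  shows "\<exists>\<sigma>. leaf_ordering \<rho> L \<sigma> \<and> corrected_ola_dist \<rho> L Ts \<sigma> + 1 \<le> card F"
proof -
  define G where "G = inheritance_graph \<rho> Ts F"
  define f where "f C = card {D\<in>F. (D, C) \<in> G\<^sup>+}" for C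
  have finF: "finite F" using aaf unfolding acyclic_agreement_forest_def agreement_forest_def is_forest_def by blast
  have acG: "acyclic G" using aaf unfolding acyclic_agreement_forest_def G_def by blast
  have GF: "G \<subseteq> F \<times> F" unfolding G_def inheritance_graph_def by auto
  obtain \<sigma> where \<sigma>: "bij_betw \<sigma> (L - {\<rho>}) {0..<card (L - {\<rho>})}"
    "\<forall>x\<in>L - {\<rho>}. \<forall>y\<in>L - {\<rho>}. f (component_of \<rho> F x) < f (component_of \<rho> F y) \<longrightarrow> \<sigma> x < \<sigma> y"
    using ex_bij_betw_strict_mono_on[OF finite_Diff[OF finL], where k = "\<lambda>x. f (component_of \<rho> F x)"] by blast
  then have leaf_ord: "leaf_ordering \<rho> L \<sigma>" unfolding leaf_ordering_def by blast
  interpret ordered_trees_ref \<rho> L Ts \<sigma> t0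
    by unfold_locales (use finL rhoL trees leaf_ord t0 in auto)
  have "\<sigma> x < \<sigma> y"
    if "x \<in> L - {\<rho>}" "y \<in> L - {\<rho>}" "(component_of \<rho> F x, component_of \<rho> F y) \<in> G" for x y
    using \<sigma>(2) that trancl_card_strict_mono[OF finF acG GF that(3)] unfolding f_def by blast
  then have "card (mism (n - 1)) + 1 \<le> card F"
    using card_mism_le_aaf[OF aaf] unfolding G_def by blast
  then show ?thesis using leaf_ord unfolding corrected_ola_dist_def n_def by auto
qed

lemma corrected_ola_dist_le: "corrected_ola_dist \<rho> L Ts \<sigma> \<le> card (L - {\<rho>})"
proof -
  have "corrected_ola_dist \<rho> L Ts \<sigma> \<le> card {1..card (L - {\<rho>}) - 1}"
    unfolding corrected_ola_dist_def by (intro card_mono) (simp, rule mismatch_upto_subset)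
  then show ?thesis by simp
qed

lemma flabels_ne: "flabels \<rho> C \<noteq> {}"
  by (cases "(\<rho>, C)" rule: flabels.cases) (auto simp: leaves_ne)

lemma card_aaf_le:
  assumes aaf: "acyclic_agreement_forest \<rho> L Ts F" and t: "t \<in> Ts" and finL: "finite L"
  shows "card F \<le> card L"
proof -
  have U: "(\<Union>C\<in>F. flabels \<rho> C) = L" using aaf t
    unfolding acyclic_agreement_forest_def agreement_forest_def agrees_with_def by blast
  have D: "\<forall>C\<in>F. \<forall>C'\<in>F. C \<noteq> C' \<longrightarrow> flabels \<rho> C \<inter> flabels \<rho> C' = {}" using aaf
    unfolding acyclic_agreement_forest_def agreement_forest_def is_forest_def by blast
  define h where "h C = (SOME x. x \<in> flabels \<rho> C)" for C
  have hC: "h C \<in> flabels \<rho> C" for C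
    unfolding h_def using flabels_ne[of \<rho> C] by (simp add: some_in_eq)
  have "inj_on h F"
    using D hC by (intro inj_onI) (metis disjoint_iff)
  moreover have "h ` F \<subseteq> L" using hC U by blast
  ultimately show ?thesis using card_mono[OF finL] card_image by metis
qed

lemma aaf_of_leaf_ordering:
  assumes "finite L" "\<rho> \<in> L" "\<forall>t\<in>Ts. is_tree \<rho> L t" "t0 \<in> Ts" "leaf_ordering \<rho> L \<sigma>"
  shows "\<exists>F. acyclic_agreement_forest \<rho> L Ts F \<and> card F = corrected_ola_dist \<rho> L Ts \<sigma> + 1"
proof -
  interpret ordered_trees_ref \<rho> L Ts \<sigma> t0
    by unfold_locales (use assms in auto)
  show ?thesis using aaf_of_blocks unfolding corrected_ola_dist_def n_def by simp
qed

lemma Min_eq_Min_minus_one: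
  fixes D R :: "nat set"
  assumes "finite D" "D \<noteq> {}" "finite R"
    and "\<And>d. d \<in> D \<Longrightarrow> d + 1 \<in> R" and "\<And>r. r \<in> R \<Longrightarrow> \<exists>d\<in>D. d + 1 \<le> r"
  shows "Min D = Min R - 1"
proof -
  have "Min D + 1 \<in> R" using assms(1,2,4) by simp
  moreover obtain d where "d \<in> D" "d + 1 \<le> Min R"
    using assms(5)[OF Min_in[OF assms(3)]] \<open>Min D + 1 \<in> R\<close> by blast
  ultimately show ?thesis using assms(1,3) by (metis Min_le add_diff_cancel_right' le_antisym le_trans add_le_mono1)
qed

theorem theorem1:
  fixes \<rho> :: 'a and L :: "'a set" and Ts :: "'a btree set"
  assumes "finite L" and "\<rho> \<in> L"
    and "finite Ts" and "card Ts > 1"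
    and "\<forall>t\<in>Ts. is_tree \<rho> L t"
  shows "Min {corrected_ola_dist \<rho> L Ts \<sigma> | \<sigma>. leaf_ordering \<rho> L \<sigma>} = reticulation_number \<rho> L Ts"
proof -
  let ?D = "{corrected_ola_dist \<rho> L Ts \<sigma> | \<sigma>. leaf_ordering \<rho> L \<sigma>}"
  let ?R = "{card F | F. acyclic_agreement_forest \<rho> L Ts F}"
  obtain t0 where t0: "t0 \<in> Ts" using assms(4) by fastforce
  obtain \<sigma>0 where "bij_betw \<sigma>0 (L - {\<rho>}) {0..<card (L - {\<rho>})}"
    using ex_bij_betw_finite_nat assms(1) by blast
  then have "?D \<noteq> {}" unfolding leaf_ordering_def by blast
  have "?D \<subseteq> {..card (L - {\<rho>})}" using corrected_ola_dist_le by auto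
  then have "finite ?D" by (rule finite_subset) simp
  have "?R \<subseteq> {..card L}" using card_aaf_le[OF _ t0 assms(1)] by auto
  then have "finite ?R" by (rule finite_subset) simp
  show ?thesis unfolding reticulation_number_def
  proof (rule Min_eq_Min_minus_one)
    fix d assume "d \<in> ?D"
    then show "d + 1 \<in> ?R" using aaf_of_leaf_ordering[OF assms(1,2,5) t0] by force
  next
    fix r assume "r \<in> ?R"
    then show "\<exists>d\<in>?D. d + 1 \<le> r" using ordering_of_aaf[OF assms(1,2,5) t0] by blast
  qed fact+
qed

end
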